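(* Let $(X,\mathcal{O}(X))$ be a measurable space, $\mathcal{A}$ a unital $C^*$-algebra and $\mathcal{H}$ a finite-dimensional Hilbert space. Let $\mathcal{I}:\mathcal{O}(X)\to CP(\mathcal{A},\mathcal{B}(\mathcal{H}))$ be a UCP instrument which is $C^*$-extreme in $I_{\mathcal{H}}(X,\mathcal{A})$, with minimal bi-dilation $(\mathcal{K},\pi,E,V)$. Then the CP sub-minimal dilation of $\mathcal{I}$ coincides with its minimal bi-dilation; that is, $\overline{\mathrm{span}}\{\pi(a)Vh:a\in\mathcal{A},h\in\mathcal{H}\}=\mathcal{K}$, so that $(\mathcal{K},\pi,E,V)$ is itself the CP sub-minimal dilation of $\mathcal{I}$.
   Context: A CP instrument is a map $\mathcal{I}$ from $\mathcal{O}(X)$ to the completely positive maps $\mathcal{A}\to\mathcal{B}(\mathcal{H})$ such that for all $a\in\mathcal{A}$, $h,k\in\mathcal{H}$, $A\mapsto\langle h,\mathcal{I}(A)(a)k\rangle$ is a countably additive complex measure; write $\mathcal{I}(A,a)=\mathcal{I}(A)(a)$. It is UCP if $\mathcal{I}(X)(1_\mathcal{A})=I_\mathcal{H}$; $I_{\mathcal{H}}(X,\mathcal{A})$ is the set of UCP instruments. $\mathcal{I}$ is $C^*$-extreme if whenever $\mathcal{I}(\cdot)=\sum_{i=1}^nT_i^*\mathcal{I}_i(\cdot)T_i$ with $\mathcal{I}_i\in I_{\mathcal{H}}(X,\mathcal{A})$ and invertible $T_i$, $\sum T_i^*T_i=I_\mathcal{H}$, there are unitaries $U_i$ with $\mathcal{I}_i(\cdot)=U_i^*\mathcal{I}(\cdot)U_i$.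 A minimal bi-dilation is a quadruple $(\mathcal{K},\pi,E,V)$ with $\pi:\mathcal{A}\to\mathcal{B}(\mathcal{K})$ a unital $*$-homomorphism, $E:\mathcal{O}(X)\to\mathcal{B}(\mathcal{K})$ a spectral measure commuting with $\pi$, $V\in\mathcal{B}(\mathcal{H},\mathcal{K})$, with $\mathcal{I}(A,a)=V^*\pi(a)E(A)V$ and $\overline{\mathrm{span}}\{\pi(a)E(A)Vh\}=\mathcal{K}$. The CP sub-minimal dilation is $(\mathcal{K}_1,P_1\pi(\cdot)P_1|_{\mathcal{K}_1},P_1E(\cdot)P_1|_{\mathcal{K}_1},V)$ where $\mathcal{K}_1=\overline{\mathrm{span}}\,\pi(\mathcal{A})V\mathcal{H}$ and $P_1$ is the projection onto $\mathcal{K}_1$; it is a quadruple $(\mathcal{K}_1,\pi_1,\mu,V)$ with $\pi_1$ a unital $*$-homomorphism, $\mu$ a normalized POVM commuting with $\pi_1$, $\mathcal{I}(A,a)=V^*\pi_1(a)\mu(A)V$ and $\overline{\mathrm{span}}\,\pi_1(\mathcal{A})V\mathcal{H}=\mathcal{K}_1$. *)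

theory Defs
  imports "HOL-Analysis.Analysis"
begin

class cvector = ab_group_add +
  fixes cscale :: "complex \<Rightarrow> 'a \<Rightarrow> 'a" (infixr \<open>*\<^sub>C\<close> 75)
  assumes cscale_add_right: "c *\<^sub>C (x + y) = c *\<^sub>C x + c *\<^sub>C y"
    and cscale_add_left: "(c + d) *\<^sub>C x = c *\<^sub>C x + d *\<^sub>C x"
    and cscale_cscale: "c *\<^sub>C (d *\<^sub>C x) = (c * d) *\<^sub>C x"
    and cscale_one: "1 *\<^sub>C x = x"

text \<open>Inner product: conjugate-linear in the first, linear in the second argument.\<close>
class cinner_space = cvector +
  fixes cinner :: "'a \<Rightarrow> 'a \<Rightarrow> complex"
  assumes cinner_conj: "cinner x y = cnj (cinner y x)"
    and cinner_add_right: "cinner x (y + z) = cinner x y + cinner x z"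
    and cinner_cscale_right: "cinner x (c *\<^sub>C y) = c * cinner x y"
    and cinner_nonneg: "Im (cinner x x) = 0 \<and> 0 \<le> Re (cinner x x)"
    and cinner_zero_iff: "cinner x x = 0 \<longleftrightarrow> x = 0"

definition cnorm :: "'a::cinner_space \<Rightarrow> real" where
  "cnorm x = sqrt (Re (cinner x x))"

class chilbert = cinner_space +
  assumes chilbert_complete:
    "(\<forall>e>0. \<exists>N::nat. \<forall>m\<ge>N. \<forall>n\<ge>N. sqrt (Re (cinner (X m - X n) (X m - X n))) < e)
       \<Longrightarrow> (\<exists>L. \<forall>e>0. \<exists>N::nat. \<forall>n\<ge>N. sqrt (Re (cinner (X n - L) (X n - L))) < e)"

definition lin_span :: "'a::cvector set \<Rightarrow> 'a set" where
  "lin_span S = {\<Sum>i<(n::nat). c i *\<^sub>C v i | n c v. \<forall>i<n. v i \<in> S}"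

definition norm_closure :: "'a::cinner_space set \<Rightarrow> 'a set" where
  "norm_closure S = {x. \<forall>e>0. \<exists>y\<in>S. cnorm (x - y) < e}"

definition finite_dim :: "'a::cvector itself \<Rightarrow> bool" where
  "finite_dim _ \<longleftrightarrow> (\<exists>B::'a set. finite B \<and> lin_span B = UNIV)"

definition clinear :: "('a::cvector \<Rightarrow> 'b::cvector) \<Rightarrow> bool" where
  "clinear f \<longleftrightarrow> (\<forall>x y. f (x + y) = f x + f y) \<and> (\<forall>c x. f (c *\<^sub>C x) = c *\<^sub>C f x)"

definition bounded_clinear :: "('a::cinner_space \<Rightarrow> 'b::cinner_space) \<Rightarrow> bool" where
  "bounded_clinear T \<longleftrightarrow> clinear T \<and> (\<exists>K. \<forall>x. cnorm (T x) \<le> K * cnorm x)"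

definition adj :: "('a::cinner_space \<Rightarrow> 'b::cinner_space) \<Rightarrow> 'b \<Rightarrow> 'a" where
  "adj T = (SOME S. \<forall>x y. cinner (T x) y = cinner x (S y))"

definition invertible_op :: "('a::cinner_space \<Rightarrow> 'a) \<Rightarrow> bool" where
  "invertible_op T \<longleftrightarrow> bounded_clinear T \<and>
     (\<exists>S. bounded_clinear S \<and> S \<circ> T = id \<and> T \<circ> S = id)"

definition unitary_op :: "('a::chilbert \<Rightarrow> 'a) \<Rightarrow> bool" where
  "unitary_op U \<longleftrightarrow> bounded_clinear U \<and> adj U \<circ> U = id \<and> U \<circ> adj U = id"

definition orth_proj :: "('a::chilbert \<Rightarrow> 'a) \<Rightarrow> bool" where
  "orth_proj P \<longleftrightarrow> bounded_clinear P \<and> P \<circ> P = P \<and> adj P = P"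

definition cnonneg :: "complex \<Rightarrow> bool" where
  "cnonneg z \<longleftrightarrow> Im z = 0 \<and> 0 \<le> Re z"

text \<open>A unital C*-algebra: complex Banach algebra with unit, involution \<open>cstar\<close>,
  and the C*-identity. (The zero algebra is allowed.)\<close>
class cstar_algebra = cvector + ring + monoid_mult +
  fixes cstar :: "'a \<Rightarrow> 'a"
    and anorm :: "'a \<Rightarrow> real"
  assumes cscale_mult_left: "(c *\<^sub>C a) * b = c *\<^sub>C (a * b)"
    and cscale_mult_right: "a * (c *\<^sub>C b) = c *\<^sub>C (a * b)"
    and anorm_nonneg: "0 \<le> anorm a"
    and anorm_zero_iff: "anorm a = 0 \<longleftrightarrow> a = 0"
    and anorm_triangle: "anorm (a + b) \<le> anorm a + anorm b"
    and anorm_cscale: "anorm (c *\<^sub>C a) = cmod c * anorm a"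
    and anorm_mult: "anorm (a * b) \<le> anorm a * anorm b"
    and anorm_complete:
      "(\<forall>e>0. \<exists>N::nat. \<forall>m\<ge>N. \<forall>n\<ge>N. anorm (X m - X n) < e)
         \<Longrightarrow> (\<exists>L. \<forall>e>0. \<exists>N::nat. \<forall>n\<ge>N. anorm (X n - L) < e)"
    and cstar_cstar: "cstar (cstar a) = a"
    and cstar_add: "cstar (a + b) = cstar a + cstar b"
    and cstar_cscale: "cstar (c *\<^sub>C a) = cnj c *\<^sub>C cstar a"
    and cstar_mult: "cstar (a * b) = cstar b * cstar a"
    and cstar_identity: "anorm (cstar a * a) = anorm a ^ 2"

text \<open>Completely positive map \<open>\<A> \<rightarrow> B(\<H>)\<close>: linear, bounded-operator valued, and for every
  \<open>n\<close> the amplification \<open>\<phi>\<^sub>n\<close> maps each positive element \<open>B\<^sup>*B\<close> of \<open>M\<^sub>n(\<A>)\<close> to a positive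
  operator on \<open>\<H>\<^sup>n\<close>.\<close>
definition cp_map :: "('a::cstar_algebra \<Rightarrow> 'h::chilbert \<Rightarrow> 'h) \<Rightarrow> bool" where
  "cp_map \<phi> \<longleftrightarrow>
     (\<forall>a b. \<phi> (a + b) = (\<lambda>x. \<phi> a x + \<phi> b x)) \<and>
     (\<forall>c a. \<phi> (c *\<^sub>C a) = (\<lambda>x. c *\<^sub>C \<phi> a x)) \<and>
     (\<forall>a. bounded_clinear (\<phi> a)) \<and>
     (\<forall>(n::nat) (B::nat \<Rightarrow> nat \<Rightarrow> 'a) (x::nat \<Rightarrow> 'h).
        cnonneg (\<Sum>i<n. \<Sum>j<n. cinner (x i) (\<phi> (\<Sum>k<n. cstar (B k i) * B k j) (x j))))"

definition countably_additive_c :: "'x measure \<Rightarrow> ('x set \<Rightarrow> complex) \<Rightarrow> bool" where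
  "countably_additive_c M \<mu> \<longleftrightarrow>
     (\<forall>F::nat \<Rightarrow> 'x set. range F \<subseteq> sets M \<longrightarrow> disjoint_family F \<longrightarrow>
        (\<lambda>n. \<mu> (F n)) sums \<mu> (\<Union>n. F n))"

definition cp_instrument ::
  "'x measure \<Rightarrow> ('x set \<Rightarrow> 'a::cstar_algebra \<Rightarrow> 'h::chilbert \<Rightarrow> 'h) \<Rightarrow> bool" where
  "cp_instrument M \<I> \<longleftrightarrow>
     (\<forall>A\<in>sets M. cp_map (\<I> A)) \<and>
     (\<forall>a h k. countably_additive_c M (\<lambda>A. cinner h (\<I> A a k)))"

definition ucp_instrument ::
  "'x measure \<Rightarrow> ('x set \<Rightarrow> 'a::cstar_algebra \<Rightarrow> 'h::chilbert \<Rightarrow> 'h) \<Rightarrow> bool" where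
  "ucp_instrument M \<I> \<longleftrightarrow> cp_instrument M \<I> \<and> \<I> (space M) 1 = id"

text \<open>C*-extreme points of \<open>I\<^sub>\<H>(X,\<A>)\<close>; instruments are compared on measurable sets.\<close>
definition cstar_extreme_instrument ::
  "'x measure \<Rightarrow> ('x set \<Rightarrow> 'a::cstar_algebra \<Rightarrow> 'h::chilbert \<Rightarrow> 'h) \<Rightarrow> bool" where
  "cstar_extreme_instrument M \<I> \<longleftrightarrow> ucp_instrument M \<I> \<and>
     (\<forall>(n::nat) (J::nat \<Rightarrow> 'x set \<Rightarrow> 'a \<Rightarrow> 'h \<Rightarrow> 'h) (T::nat \<Rightarrow> 'h \<Rightarrow> 'h).
        (\<forall>i<n. ucp_instrument M (J i) \<and> invertible_op (T i)) \<longrightarrow>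
        (\<forall>x. (\<Sum>i<n. adj (T i) (T i x)) = x) \<longrightarrow>
        (\<forall>A\<in>sets M. \<forall>a. \<I> A a = (\<lambda>x. \<Sum>i<n. adj (T i) (J i A a (T i x)))) \<longrightarrow>
        (\<exists>U::nat \<Rightarrow> 'h \<Rightarrow> 'h. \<forall>i<n. unitary_op (U i) \<and>
            (\<forall>A\<in>sets M. \<forall>a. J i A a = adj (U i) \<circ> \<I> A a \<circ> U i)))"

definition unital_star_hom :: "('a::cstar_algebra \<Rightarrow> 'k::chilbert \<Rightarrow> 'k) \<Rightarrow> bool" where
  "unital_star_hom \<pi> \<longleftrightarrow>
     (\<forall>a. bounded_clinear (\<pi> a)) \<and>
     (\<forall>a b. \<pi> (a + b) = (\<lambda>x. \<pi> a x + \<pi> b x)) \<and>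
     (\<forall>c a. \<pi> (c *\<^sub>C a) = (\<lambda>x. c *\<^sub>C \<pi> a x)) \<and>
     (\<forall>a b. \<pi> (a * b) = \<pi> a \<circ> \<pi> b) \<and>
     (\<forall>a. \<pi> (cstar a) = adj (\<pi> a)) \<and>
     \<pi> 1 = id"

definition spectral_measure :: "'x measure \<Rightarrow> ('x set \<Rightarrow> 'k::chilbert \<Rightarrow> 'k) \<Rightarrow> bool" where
  "spectral_measure M E \<longleftrightarrow>
     (\<forall>A\<in>sets M. orth_proj (E A)) \<and> E (space M) = id \<and>
     (\<forall>h k. countably_additive_c M (\<lambda>A. cinner h (E A k)))"

definition minimal_bi_dilation ::
  "'x measure \<Rightarrow> ('x set \<Rightarrow> 'a::cstar_algebra \<Rightarrow> 'h::chilbert \<Rightarrow> 'h)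
     \<Rightarrow> ('a \<Rightarrow> 'k::chilbert \<Rightarrow> 'k) \<Rightarrow> ('x set \<Rightarrow> 'k \<Rightarrow> 'k) \<Rightarrow> ('h \<Rightarrow> 'k) \<Rightarrow> bool" where
  "minimal_bi_dilation M \<I> \<pi> E V \<longleftrightarrow>
     unital_star_hom \<pi> \<and> spectral_measure M E \<and> bounded_clinear V \<and>
     (\<forall>A\<in>sets M. \<forall>a. \<pi> a \<circ> E A = E A \<circ> \<pi> a) \<and>
     (\<forall>A\<in>sets M. \<forall>a. \<I> A a = adj V \<circ> \<pi> a \<circ> E A \<circ> V) \<and>
     norm_closure (lin_span {\<pi> a (E A (V h)) | a A h. A \<in> sets M}) = UNIV"

end

theory Submission
  imports Defs
begin

lemma cscale_zero_left [simp]: "0 *\<^sub>C (x::'a::cvector) = 0"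
  using cscale_add_left[of 0 0 x] by simp

lemma cscale_zero_right [simp]: "c *\<^sub>C (0::'a::cvector) = 0"
  using cscale_add_right[of c 0 0] by simp

lemma cscale_minus_right: "c *\<^sub>C (- (x::'a::cvector)) = - (c *\<^sub>C x)"
  using cscale_add_right[of c "- x" x] by (simp add: eq_neg_iff_add_eq_0)

lemma cscale_diff_right: "c *\<^sub>C ((x::'a::cvector) - y) = c *\<^sub>C x - c *\<^sub>C y"
  by (metis diff_conv_add_uminus cscale_add_right cscale_minus_right)

lemma cscale_diff_left: "(c - d) *\<^sub>C (x::'a::cvector) = c *\<^sub>C x - d *\<^sub>C x"
  using cscale_add_left[of "c - d" d x] by (simp add: eq_diff_eq)

lemma cscale_two: "2 *\<^sub>C (x::'a::cvector) = x + x"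
  using cscale_add_left[of 1 1 x] by (simp add: cscale_one)

lemma cscale_sum_right: "c *\<^sub>C (\<Sum>i\<in>S. f i) = (\<Sum>i\<in>S. c *\<^sub>C (f i::'a::cvector))"
  by (induction S rule: infinite_finite_induct) (auto simp: cscale_add_right)

locale semi_inner_form =
  fixes B :: "'a::cvector \<Rightarrow> 'a \<Rightarrow> complex"
  assumes conj_sym: "B x y = cnj (B y x)"
    and add_right: "B x (y + z) = B x y + B x z"
    and scale_right: "B x (c *\<^sub>C y) = c * B x y"
    and self_nonneg: "cnonneg (B x x)"
begin

lemma add_left: "B (x + y) z = B x z + B y z"
  by (metis add_right conj_sym complex_cnj_add)

lemma scale_left: "B (c *\<^sub>C x) y = cnj c * B x y"
  by (metis scale_right conj_sym complex_cnj_mult)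

lemma zero_right [simp]: "B x 0 = 0"
  by (metis scale_right cscale_zero_left mult_zero_left)

lemma zero_left [simp]: "B 0 x = 0"
  by (metis conj_sym zero_right complex_cnj_zero)

lemma diff_right: "B x (y - z) = B x y - B x z"
  by (metis add_right add_diff_cancel eq_diff_eq)

lemma diff_left: "B (x - y) z = B x z - B y z"
  by (metis add_left add_diff_cancel eq_diff_eq)

lemma sum_right: "B x (\<Sum>i\<in>S. f i) = (\<Sum>i\<in>S. B x (f i))"
  by (induction S rule: infinite_finite_induct) (auto simp: add_right)

lemma sum_left: "B (\<Sum>i\<in>S. f i) x = (\<Sum>i\<in>S. B (f i) x)"
  by (induction S rule: infinite_finite_induct) (auto simp: add_left)

lemma Re_self_nonneg: "0 \<le> Re (B x x)"
  using self_nonneg by (simp add: cnonneg_def)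

lemma self_real: "B x x = complex_of_real (Re (B x x))"
  using self_nonneg by (simp add: cnonneg_def complex_eq_iff)

lemma Cauchy_Schwarz: "(cmod (B x y))\<^sup>2 \<le> Re (B x x) * Re (B y y)"
proof -
  define b where "b = B x y"
  have quadratic: "0 \<le> Re (B y y) - 2 * t * (cmod b)\<^sup>2 + t\<^sup>2 * (cmod b)\<^sup>2 * Re (B x x)" for t :: real
  proof -
    define s where "s = - (complex_of_real t * b)"
    have bb: "b * cnj b = complex_of_real ((cmod b)\<^sup>2)"
      by (metis complex_norm_square of_real_power)
    have "B (y + s *\<^sub>C x) (y + s *\<^sub>C x) = B y y + s * cnj b + cnj s * b + cnj s * s * B x x"
      by (simp add: add_left add_right scale_left scale_right b_def conj_sym[of y x] algebra_simps)
    moreover have "s * cnj b = - complex_of_real (t * (cmod b)\<^sup>2)"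
      and "cnj s * b = - complex_of_real (t * (cmod b)\<^sup>2)"
      and "cnj s * s = complex_of_real (t\<^sup>2 * (cmod b)\<^sup>2)"
      unfolding s_def using bb by (simp_all add: algebra_simps power2_eq_square)
    ultimately have "Re (B (y + s *\<^sub>C x) (y + s *\<^sub>C x))
        = Re (B y y) - 2 * t * (cmod b)\<^sup>2 + t\<^sup>2 * (cmod b)\<^sup>2 * Re (B x x)"
      by (subst (asm) self_real[of x]) simp
    then show ?thesis using Re_self_nonneg[of "y + s *\<^sub>C x"] by simp
  qed
  show ?thesis
  proof (cases "Re (B x x) = 0")
    case True
    have "(cmod b)\<^sup>2 = 0"
    proof (rule ccontr)
      assume "(cmod b)\<^sup>2 \<noteq> 0"
      then have "(cmod b)\<^sup>2 > 0" by simp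
      then show False
        using quadratic[of "(Re (B y y) + 1) / (cmod b)\<^sup>2"] True Re_self_nonneg[of y] by simp
    qed
    then show ?thesis using True by (simp add: b_def)
  next
    case False
    then have pos: "Re (B x x) > 0" using Re_self_nonneg[of x] by simp
    have "0 \<le> Re (B y y) - 2 * (1 / Re (B x x)) * (cmod b)\<^sup>2
              + (1 / Re (B x x))\<^sup>2 * (cmod b)\<^sup>2 * Re (B x x)"
      by (rule quadratic)
    also have "\<dots> = Re (B y y) - (cmod b)\<^sup>2 / Re (B x x)"
      using pos by (simp add: power2_eq_square field_simps)
    finally show ?thesis using pos by (simp add: b_def divide_le_eq mult.commute)
  qed
qed

end

locale inner_form = semi_inner_form +
  assumes self_eq_zero: "B x x = 0 \<longleftrightarrow> x = 0"
begin

lemma Re_self_pos: "x \<noteq> 0 \<Longrightarrow> 0 < Re (B x x)"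
  by (metis self_eq_zero self_real Re_self_nonneg less_eq_real_def of_real_0)

lemma ext: "(\<And>z. B z x = B z y) \<Longrightarrow> x = y"
  by (metis self_eq_zero diff_right right_minus_eq)

end

interpretation cinner: inner_form cinner
  by unfold_locales
    (simp_all add: cinner_add_right cinner_cscale_right cinner_zero_iff cnonneg_def cinner_nonneg
      cinner_conj[symmetric])


lemma cnorm_nonneg: "0 \<le> cnorm x"
  by (simp add: cnorm_def cinner.Re_self_nonneg)

lemma power2_cnorm: "(cnorm x)\<^sup>2 = Re (cinner x x)"
  by (simp add: cnorm_def cinner.Re_self_nonneg)

lemma cnorm_eq_zero_iff [simp]: "cnorm x = 0 \<longleftrightarrow> x = 0"
proof -
  have "cnorm x = 0 \<longleftrightarrow> Re (cinner x x) = 0"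
    by (simp add: cnorm_def)
  also have "\<dots> \<longleftrightarrow> cinner x x = 0"
    using cinner.self_nonneg[of x] by (auto simp: cnonneg_def complex_eq_iff)
  finally show ?thesis by (simp add: cinner.self_eq_zero)
qed

lemma cnorm_zero [simp]: "cnorm 0 = 0"
  by simp

lemma cnorm_cscale: "cnorm (c *\<^sub>C x) = cmod c * cnorm x"
proof -
  have "c * cnj c = complex_of_real ((cmod c)\<^sup>2)"
    by (metis complex_norm_square of_real_power)
  then have "cinner (c *\<^sub>C x) (c *\<^sub>C x) = (cmod c)\<^sup>2 * cinner x x"
    by (simp add: cinner.scale_left cinner.scale_right mult.assoc[symmetric] del: of_real_power)
  then have "Re (cinner (c *\<^sub>C x) (c *\<^sub>C x)) = (cmod c)\<^sup>2 * Re (cinner x x)"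
    by (simp del: of_real_power)
  then show ?thesis by (simp add: cnorm_def real_sqrt_mult)
qed

lemma cnorm_minus_commute: "cnorm (x - y) = cnorm (y - x)"
proof -
  have "cinner (x - y) (x - y) = cinner (y - x) (y - x)"
    by (simp add: cinner.diff_left cinner.diff_right)
  then show ?thesis by (simp add: cnorm_def)
qed
lemma norm_cinner_le: "cmod (cinner x y) \<le> cnorm x * cnorm y"
proof -
  have "(cmod (cinner x y))\<^sup>2 \<le> (cnorm x * cnorm y)\<^sup>2"
    using cinner.Cauchy_Schwarz by (simp add: power_mult_distrib power2_cnorm)
  then show ?thesis by (meson cnorm_nonneg mult_nonneg_nonneg power2_le_imp_le)
qed

lemma cnorm_triangle: "cnorm (x + y) \<le> cnorm x + cnorm y"
proof -
  have "(cnorm (x + y))\<^sup>2 = (cnorm x)\<^sup>2 + 2 * Re (cinner x y) + (cnorm y)\<^sup>2"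
    by (simp add: power2_cnorm cinner.add_left cinner.add_right cinner.conj_sym[of y x])
  also have "\<dots> \<le> (cnorm x + cnorm y)\<^sup>2"
    using norm_cinner_le[of x y] complex_Re_le_cmod[of "cinner x y"] by (simp add: power2_sum)
  finally show ?thesis by (meson add_nonneg_nonneg cnorm_nonneg power2_le_imp_le)
qed

lemma cnorm_triangle_diff: "cnorm (x - z) \<le> cnorm (x - y) + cnorm (y - z)"
  using cnorm_triangle[of "x - y" "y - z"] by simp

lemma cnorm_sum: "cnorm (\<Sum>i\<in>S. f i) \<le> (\<Sum>i\<in>S. cnorm (f i))"
  by (induction S rule: infinite_finite_induct) (auto intro: order_trans[OF cnorm_triangle])

lemma cnorm_parallelogram:
  "(cnorm (u + v))\<^sup>2 + (cnorm (u - v))\<^sup>2 = 2 * (cnorm u)\<^sup>2 + 2 * (cnorm v)\<^sup>2"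
  by (simp add: power2_cnorm cinner.add_left cinner.add_right cinner.diff_left cinner.diff_right)

lemma power2_cnorm_diff_projection:
  assumes "y \<noteq> 0"
  shows "(cnorm (w - (cinner y w / cinner y y) *\<^sub>C y))\<^sup>2
           = (cnorm w)\<^sup>2 - (cmod (cinner y w))\<^sup>2 / Re (cinner y y)"
proof -
  define t where "t = cinner y w / cinner y y"
  have nz: "cinner y y \<noteq> 0" using assms cinner.self_eq_zero by blast
  have "cinner (w - t *\<^sub>C y) (w - t *\<^sub>C y)
        = cinner w w - t * cinner w y - cnj t * cinner y w + cnj t * t * cinner y y"
    by (simp add: cinner.diff_left cinner.diff_right cinner.scale_left cinner.scale_right algebra_simps)
  also have "\<dots> = cinner w w - cinner w y * cinner y w / cinner y y"
    unfolding t_def using nz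
    by (simp add: cinner.conj_sym[of y y, symmetric] cinner.conj_sym[of w y] field_simps)
  also have "cinner w y * cinner y w = complex_of_real ((cmod (cinner y w))\<^sup>2)"
    by (metis cinner.conj_sym complex_norm_square mult.commute)
  also have "cinner y y = complex_of_real (Re (cinner y y))" by (rule cinner.self_real)
  finally show ?thesis
    unfolding t_def power2_cnorm by (metis Re_divide_of_real Re_complex_of_real minus_complex.simps(1))
qed


lemma minimizing_sequence_Cauchy:
  fixes x :: "'a::cinner_space"
  assumes midpoint: "\<And>y z. y \<in> N \<Longrightarrow> z \<in> N \<Longrightarrow> (1/2) *\<^sub>C (y + z) \<in> N"
    and lower: "\<And>y. y \<in> N \<Longrightarrow> d \<le> cnorm (x - y)" and "0 \<le> d"
    and m: "\<And>n. m n \<in> N" and close: "\<And>n. cnorm (x - m n) < d + 1 / real (Suc n)"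
    and "0 < e"
  shows "\<exists>K. \<forall>p\<ge>K. \<forall>q\<ge>K. cnorm (m p - m q) < e"
proof -
  have close2: "(cnorm (x - m n))\<^sup>2 \<le> d\<^sup>2 + (2 * d + 1) / real (Suc n)" for n
  proof -
    have "(cnorm (x - m n))\<^sup>2 \<le> (d + 1 / real (Suc n))\<^sup>2"
      using close[of n] cnorm_nonneg by (intro power_mono) auto
    also have "\<dots> = d\<^sup>2 + (2 * d + 1 / real (Suc n)) * (1 / real (Suc n))"
      by (simp add: power2_eq_square algebra_simps)
    also have "\<dots> \<le> d\<^sup>2 + (2 * d + 1) * (1 / real (Suc n))"
      by (intro add_left_mono mult_right_mono) auto
    finally show ?thesis by simp
  qed
  have diff2: "(cnorm (m p - m q))\<^sup>2 \<le> (4 * d + 2) / real (Suc p) + (4 * d + 2) / real (Suc q)" for p q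
  proof -
    let ?u = "x - m p" and ?v = "x - m q"
    have half: "(1/2) *\<^sub>C w + (1/2) *\<^sub>C w = w" for w :: 'a
      using cscale_add_left[of "1/2" "1/2" w] by (simp add: cscale_one)
    have "2 *\<^sub>C (x - (1/2) *\<^sub>C (m p + m q))
          = x + x - ((1/2) *\<^sub>C (m p + m q) + (1/2) *\<^sub>C (m p + m q))"
      by (simp add: cscale_two algebra_simps)
    then have "?u + ?v = 2 *\<^sub>C (x - (1/2) *\<^sub>C (m p + m q))"
      by (simp only: half) (simp add: algebra_simps)
    then have "cnorm (?u + ?v) = 2 * cnorm (x - (1/2) *\<^sub>C (m p + m q))"
      by (simp add: cnorm_cscale)
    moreover have "d \<le> cnorm (x - (1/2) *\<^sub>C (m p + m q))"
      by (intro lower midpoint m)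
    ultimately have "4 * d\<^sup>2 \<le> (cnorm (?u + ?v))\<^sup>2"
      using power_mono[of "2 * d" "cnorm (?u + ?v)" 2] \<open>0 \<le> d\<close> by (simp add: power_mult_distrib)
    have "(cnorm (m p - m q))\<^sup>2 = 2 * (cnorm ?u)\<^sup>2 + 2 * (cnorm ?v)\<^sup>2 - (cnorm (?u + ?v))\<^sup>2"
      using cnorm_parallelogram[of ?u ?v] cnorm_minus_commute[of "m p" "m q"] by simp
    also have "\<dots> \<le> 2 * (d\<^sup>2 + (2 * d + 1) / real (Suc p)) + 2 * (d\<^sup>2 + (2 * d + 1) / real (Suc q)) - 4 * d\<^sup>2"
      using close2[of p] close2[of q] \<open>4 * d\<^sup>2 \<le> _\<close> by (smt (verit))
    also have "\<dots> = (4 * d + 2) / real (Suc p) + (4 * d + 2) / real (Suc q)"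
      by (simp add: ring_distribs add_divide_distrib)
    finally show ?thesis .
  qed
  obtain K :: nat where "(8 * d + 4) / e\<^sup>2 < real K"
    using reals_Archimedean2 by blast
  then have K: "(8 * d + 4) / real (Suc K) < e\<^sup>2"
    using \<open>0 < e\<close> \<open>0 \<le> d\<close> by (simp add: field_simps) (smt (verit) zero_less_power)
  have "cnorm (m p - m q) < e" if "K \<le> p" "K \<le> q" for p q
  proof -
    have "(cnorm (m p - m q))\<^sup>2 \<le> (4 * d + 2) / real (Suc p) + (4 * d + 2) / real (Suc q)"
      by (rule diff2)
    also have "\<dots> \<le> (4 * d + 2) / real (Suc K) + (4 * d + 2) / real (Suc K)"
      using that \<open>0 \<le> d\<close> by (intro add_mono divide_left_mono) auto
    also have "\<dots> < e\<^sup>2"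
      using K by (simp add: add_divide_distrib[symmetric])
    finally show ?thesis
      using \<open>0 < e\<close> by (simp add: power_less_imp_less_base)
  qed
  then show ?thesis by blast
qed

lemma exists_nearest_point:
  fixes x :: "'a::chilbert"
  assumes "y0 \<in> N"
    and midpoint: "\<And>y z. y \<in> N \<Longrightarrow> z \<in> N \<Longrightarrow> (1/2) *\<^sub>C (y + z) \<in> N"
    and closed: "\<And>(m :: nat \<Rightarrow> 'a) L. (\<And>n. m n \<in> N) \<Longrightarrow> (\<And>e. 0 < e \<Longrightarrow> \<exists>K. \<forall>n\<ge>K. cnorm (m n - L) < e) \<Longrightarrow> L \<in> N"
  shows "\<exists>z\<in>N. \<forall>y\<in>N. cnorm (x - z) \<le> cnorm (x - y)"
proof -
  define d where "d = (INF y\<in>N. cnorm (x - y))"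
  have bdd: "bdd_below ((\<lambda>y. cnorm (x - y)) ` N)"
    by (auto intro: bdd_belowI[of _ 0] cnorm_nonneg)
  have lower: "d \<le> cnorm (x - y)" if "y \<in> N" for y
    unfolding d_def using bdd that by (rule cINF_lower)
  have "0 \<le> d"
    unfolding d_def using \<open>y0 \<in> N\<close> by (intro cINF_greatest) (auto simp: cnorm_nonneg)
  have "\<exists>y\<in>N. cnorm (x - y) < d + 1 / real (Suc n)" for n
  proof -
    have "d < d + 1 / real (Suc n)" by simp
    then show ?thesis
      using cINF_less_iff[OF _ bdd] \<open>y0 \<in> N\<close> unfolding d_def by blast
  qed
  then obtain m where m: "\<And>n. m n \<in> N" and close: "\<And>n. cnorm (x - m n) < d + 1 / real (Suc n)"
    by metis
  have "\<forall>e>0. \<exists>K. \<forall>p\<ge>K. \<forall>q\<ge>K. sqrt (Re (cinner (m p - m q) (m p - m q))) < e"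
    using minimizing_sequence_Cauchy[OF midpoint lower \<open>0 \<le> d\<close> m close]
    unfolding cnorm_def by blast
  from chilbert_complete[OF this]
  obtain L where L: "\<And>e. 0 < e \<Longrightarrow> \<exists>K. \<forall>n\<ge>K. cnorm (m n - L) < e"
    unfolding cnorm_def[symmetric] by blast
  have "cnorm (x - L) \<le> d"
  proof (rule field_le_epsilon)
    fix e :: real
    assume "0 < e"
    then obtain K where K: "\<And>n. n \<ge> K \<Longrightarrow> cnorm (m n - L) < e/2"
      using L[of "e/2"] by auto
    obtain k0 :: nat where "2 / e < real k0"
      using reals_Archimedean2 by blast
    define k where "k = max K k0"
    then have "K \<le> k" and "2 / e < real (Suc k)"
      using \<open>2 / e < real k0\<close> by auto
    then have "1 / real (Suc k) < e/2"
      using \<open>0 < e\<close> by (simp add: field_simps)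
    moreover have "cnorm (x - L) \<le> cnorm (x - m k) + cnorm (m k - L)"
      by (rule cnorm_triangle_diff)
    ultimately show "cnorm (x - L) \<le> d + e"
      using close[of k] K[OF \<open>K \<le> k\<close>] by linarith
  qed
  moreover have "L \<in> N"
    by (rule closed[of m L]) (use m L in auto)
  ultimately show ?thesis
    using lower by (meson order_trans)
qed

lemma nearest_point_orthogonal:
  fixes x :: "'a::cinner_space"
  assumes add: "\<And>y z. y \<in> N \<Longrightarrow> z \<in> N \<Longrightarrow> y + z \<in> N"
    and scale: "\<And>c y. y \<in> N \<Longrightarrow> c *\<^sub>C y \<in> N"
    and "z \<in> N" and nearest: "\<And>y. y \<in> N \<Longrightarrow> cnorm (x - z) \<le> cnorm (x - y)"
    and "y \<in> N"
  shows "cinner y (x - z) = 0"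
proof (cases "y = 0")
  case False
  define t where "t = cinner y (x - z) / cinner y y"
  have "cnorm (x - z) \<le> cnorm (x - (z + t *\<^sub>C y))"
    using assms by (intro nearest add scale)
  then have "(cnorm (x - z))\<^sup>2 \<le> (cnorm ((x - z) - t *\<^sub>C y))\<^sup>2"
    using cnorm_nonneg by (intro power_mono) (auto simp: algebra_simps)
  then have "(cmod (cinner y (x - z)))\<^sup>2 / Re (cinner y y) \<le> 0"
    using power2_cnorm_diff_projection[OF False, of "x - z"] by (simp add: t_def)
  then show ?thesis
    using cinner.Re_self_pos[OF False] by (simp add: divide_le_0_iff)
qed simp

lemma Riesz_representation:
  fixes f :: "'a::chilbert \<Rightarrow> complex"
  assumes add: "\<And>x y. f (x + y) = f x + f y" and scale: "\<And>c x. f (c *\<^sub>C x) = c * f x"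
    and bound: "\<And>x. cmod (f x) \<le> C * cnorm x"
  shows "\<exists>w. \<forall>x. f x = cinner w x"
proof (cases "\<forall>x. f x = 0")
  case False
  have diff: "f (x - y) = f x - f y" for x y
    using add[of "x - y" y] by simp
  obtain x1 where "f x1 \<noteq> 0" using False by blast
  define x0 where "x0 = (1 / f x1) *\<^sub>C x1"
  have "f x0 = 1" using \<open>f x1 \<noteq> 0\<close> by (simp add: x0_def scale)
  define N where "N = {y. f y = 0}"
  have closed: "L \<in> N" if m: "\<And>n. m n \<in> N" and lim: "\<And>e. 0 < e \<Longrightarrow> \<exists>K. \<forall>n\<ge>K. cnorm (m n - L) < e"
    for m :: "nat \<Rightarrow> 'a" and L
  proof -
    have "cmod (f L) \<le> 0 + e" if "0 < e" for e
    proof -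
      have "0 < e / (\<bar>C\<bar> + 1)" using \<open>0 < e\<close> by (intro divide_pos_pos) auto
      then obtain K where "cnorm (m K - L) < e / (\<bar>C\<bar> + 1)"
        using lim by blast
      then have small: "cnorm (L - m K) \<le> e / (\<bar>C\<bar> + 1)"
        by (simp add: cnorm_minus_commute)
      have "cmod (f L) = cmod (f (L - m K))"
        using m[of K] by (simp add: diff N_def)
      also have "\<dots> \<le> C * cnorm (L - m K)"
        by (rule bound)
      also have "\<dots> \<le> (\<bar>C\<bar> + 1) * cnorm (L - m K)"
        by (intro mult_right_mono) (auto simp: cnorm_nonneg)
      also have "\<dots> \<le> e"
        using small by (simp add: pos_le_divide_eq mult.commute add_nonneg_pos)
      finally show ?thesis by simp
    qed
    then have "cmod (f L) \<le> 0" by (rule field_le_epsilon)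
    then show ?thesis by (simp add: N_def)
  qed
  have "0 \<in> N" using scale[of 0 0] by (simp add: N_def)
  obtain z where "z \<in> N" and nearest: "\<forall>y\<in>N. cnorm (x0 - z) \<le> cnorm (x0 - y)"
  proof -
    have "\<exists>z\<in>N. \<forall>y\<in>N. cnorm (x0 - z) \<le> cnorm (x0 - y)"
    proof (rule exists_nearest_point[OF \<open>0 \<in> N\<close>])
      show "(1/2) *\<^sub>C (y + z) \<in> N" if "y \<in> N" "z \<in> N" for y z
        using that by (simp add: N_def add scale)
    qed (fact closed)
    then show ?thesis using that by blast
  qed
  define u where "u = x0 - z"
  have "f u = 1" using \<open>z \<in> N\<close> \<open>f x0 = 1\<close> by (simp add: u_def diff N_def)
  have orth: "cinner y u = 0" if "y \<in> N" for y
    unfolding u_def using nearest that \<open>z \<in> N\<close>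
    by (intro nearest_point_orthogonal[where N = N]) (auto simp: N_def add scale)
  have "u \<noteq> 0" using \<open>f u = 1\<close> \<open>0 \<in> N\<close> by (auto simp: N_def)
  then have "cinner u u \<noteq> 0" by (simp add: cinner.self_eq_zero)
  have "f x = cinner ((1 / cinner u u) *\<^sub>C u) x" for x
  proof -
    have "x - f x *\<^sub>C u \<in> N" using \<open>f u = 1\<close> by (simp add: N_def diff scale)
    then have "cinner u (x - f x *\<^sub>C u) = 0"
      using orth cinner.conj_sym[of u "x - f x *\<^sub>C u"] by simp
    then have "cinner u x = f x * cinner u u"
      by (simp add: cinner.diff_right cinner.scale_right)
    then show ?thesis
      using \<open>cinner u u \<noteq> 0\<close> cinner.conj_sym[of u u, symmetric] by (simp add: cinner.scale_left)
  qed
  then show ?thesis by blast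
qed (auto intro: exI[of _ 0])


lemma clinear_add: "clinear T \<Longrightarrow> T (x + y) = T x + T y"
  by (simp add: clinear_def)

lemma clinear_cscale: "clinear T \<Longrightarrow> T (c *\<^sub>C x) = c *\<^sub>C T x"
  by (simp add: clinear_def)

lemma clinear_zero: "clinear T \<Longrightarrow> T 0 = 0"
  using clinear_cscale[of T 0 0] by simp

lemma clinear_diff: "clinear T \<Longrightarrow> T (x - y) = T x - T y"
  using clinear_add[of T "x - y" y] by (simp add: eq_diff_eq)

lemma clinear_sum: "clinear T \<Longrightarrow> T (\<Sum>i\<in>S. f i) = (\<Sum>i\<in>S. T (f i))"
  by (induction S rule: infinite_finite_induct) (auto simp: clinear_add clinear_zero)

lemma clinear_comp: "clinear S \<Longrightarrow> clinear T \<Longrightarrow> clinear (S \<circ> T)"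
  by (simp add: clinear_def)

lemma bounded_clinear_imp_clinear: "bounded_clinear T \<Longrightarrow> clinear T"
  by (simp add: bounded_clinear_def)

lemma bounded_clinear_nonneg_bound:
  assumes "bounded_clinear T"
  obtains K where "0 \<le> K" "\<And>x. cnorm (T x) \<le> K * cnorm x"
proof -
  obtain K where K: "\<And>x. cnorm (T x) \<le> K * cnorm x"
    using assms by (auto simp: bounded_clinear_def)
  have "cnorm (T x) \<le> max K 0 * cnorm x" for x
    using K[of x] cnorm_nonneg[of x] by (meson max.cobounded1 mult_right_mono order_trans)
  then show ?thesis by (intro that[of "max K 0"]) auto
qed

lemma bounded_clinear_comp:
  assumes "bounded_clinear S" "bounded_clinear T"
  shows "bounded_clinear (S \<circ> T)"
proof -
  obtain K L where "0 \<le> K" "\<And>x. cnorm (S x) \<le> K * cnorm x" "\<And>x. cnorm (T x) \<le> L * cnorm x"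
    using assms by (metis bounded_clinear_nonneg_bound)
  then have "cnorm (S (T x)) \<le> (K * L) * cnorm x" for x
    by (metis mult.assoc mult_left_mono order_trans)
  then show ?thesis
    using assms by (auto simp: bounded_clinear_def clinear_comp)
qed

lemma adjoint_exists:
  fixes T :: "'a::chilbert \<Rightarrow> 'b::cinner_space"
  assumes "bounded_clinear T"
  shows "\<exists>S. \<forall>x y. cinner (T x) y = cinner x (S y)"
proof -
  obtain K where "0 \<le> K" and K: "\<And>x. cnorm (T x) \<le> K * cnorm x"
    using bounded_clinear_nonneg_bound[OF assms] by blast
  have "\<exists>w. \<forall>x. cinner y (T x) = cinner w x" for y
  proof (rule Riesz_representation)
    show "cinner y (T (x + x')) = cinner y (T x) + cinner y (T x')" for x x'
      using assms by (simp add: bounded_clinear_def clinear_add cinner.add_right)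
    show "cinner y (T (c *\<^sub>C x)) = c * cinner y (T x)" for c x
      using assms by (simp add: bounded_clinear_def clinear_cscale cinner.scale_right)
    show "cmod (cinner y (T x)) \<le> cnorm y * K * cnorm x" for x
      using norm_cinner_le[of y "T x"] K[of x] cnorm_nonneg[of y]
      by (metis mult.assoc mult_left_mono order_trans)
  qed
  then obtain S where "\<And>y x. cinner y (T x) = cinner (S y) x" by metis
  then show ?thesis by (metis cinner.conj_sym)
qed

lemma cinner_adj_right:
  fixes T :: "'a::chilbert \<Rightarrow> 'b::cinner_space"
  assumes "bounded_clinear T"
  shows "cinner (T x) y = cinner x (adj T y)"
  using someI_ex[OF adjoint_exists[OF assms]] unfolding adj_def by blast

lemma cinner_adj_left:
  fixes T :: "'a::chilbert \<Rightarrow> 'b::cinner_space"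
  assumes "bounded_clinear T"
  shows "cinner (adj T y) x = cinner y (T x)"
  by (metis assms cinner_adj_right cinner.conj_sym)

lemma clinear_adj:
  fixes T :: "'a::chilbert \<Rightarrow> 'b::cinner_space"
  assumes "bounded_clinear T"
  shows "clinear (adj T)"
  unfolding clinear_def
proof (intro conjI allI)
  show "adj T (y + z) = adj T y + adj T z" for y z
    by (rule cinner.ext) (simp add: cinner_adj_right[OF assms, symmetric] cinner.add_right)
  show "adj T (c *\<^sub>C y) = c *\<^sub>C adj T y" for c y
    by (rule cinner.ext) (simp add: cinner_adj_right[OF assms, symmetric] cinner.scale_right)
qed

lemma bounded_clinear_adj:
  fixes T :: "'a::chilbert \<Rightarrow> 'b::cinner_space"
  assumes "bounded_clinear T"
  shows "bounded_clinear (adj T)"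
proof -
  obtain K where "0 \<le> K" and K: "\<And>x. cnorm (T x) \<le> K * cnorm x"
    using bounded_clinear_nonneg_bound[OF assms] by blast
  have "cnorm (adj T y) \<le> K * cnorm y" for y
  proof (cases "adj T y = 0")
    case False
    have "(cnorm (adj T y))\<^sup>2 = Re (cinner (T (adj T y)) y)"
      by (simp add: power2_cnorm cinner_adj_right[OF assms])
    also have "\<dots> \<le> cnorm (T (adj T y)) * cnorm y"
      using complex_Re_le_cmod norm_cinner_le order_trans by blast
    also have "\<dots> \<le> K * cnorm (adj T y) * cnorm y"
      using K cnorm_nonneg by (intro mult_right_mono) auto
    finally have "cnorm (adj T y) * cnorm (adj T y) \<le> cnorm (adj T y) * (K * cnorm y)"
      by (simp add: power2_eq_square algebra_simps)
    moreover have "0 < cnorm (adj T y)"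
      using False cnorm_nonneg[of "adj T y"] by (simp add: less_le)
    ultimately show ?thesis by simp
  qed (simp add: \<open>0 \<le> K\<close> cnorm_nonneg)
  then show ?thesis
    using clinear_adj[OF assms] by (auto simp: bounded_clinear_def)
qed

lemma adj_inverse:
  fixes S T :: "'a::chilbert \<Rightarrow> 'a"
  assumes "bounded_clinear S" "bounded_clinear T" and "\<And>x. S (T x) = x"
  shows "adj T (adj S y) = y"
  by (rule cinner.ext) (simp add: cinner_adj_right[OF assms(1), symmetric]
      cinner_adj_right[OF assms(2), symmetric] assms(3))

lemma orth_proj_self_adjoint:
  assumes "orth_proj Q"
  shows "cinner (Q x) y = cinner x (Q y)"
  using assms cinner_adj_right[of Q] by (simp add: orth_proj_def)

lemma orth_proj_idem:
  assumes "orth_proj Q"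
  shows "Q (Q x) = Q x"
  using assms by (simp add: orth_proj_def fun_eq_iff)

lemma cscale_eq_zero_iff: "c *\<^sub>C x = 0 \<longleftrightarrow> c = 0 \<or> (x::'a::cvector) = 0"
  by (metis cscale_cscale cscale_one cscale_zero_left cscale_zero_right divide_self_if
      times_divide_eq_left mult_1)

definition span_upto :: "nat \<Rightarrow> (nat \<Rightarrow> 'a::cvector) \<Rightarrow> 'a set" where
  "span_upto n g = {\<Sum>j<n. c j *\<^sub>C g j | c. True}"

lemma span_upto_I: "x = (\<Sum>j<n. c j *\<^sub>C g j) \<Longrightarrow> x \<in> span_upto n g"
  unfolding span_upto_def by blast

lemma span_upto_add:
  assumes "x \<in> span_upto n g" "y \<in> span_upto n g"
  shows "x + y \<in> span_upto n g"
proof -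
  obtain c d where "x = (\<Sum>j<n. c j *\<^sub>C g j)" "y = (\<Sum>j<n. d j *\<^sub>C g j)"
    using assms unfolding span_upto_def by blast
  then have "x + y = (\<Sum>j<n. (c j + d j) *\<^sub>C g j)"
    by (simp add: sum.distrib cscale_add_left)
  then show ?thesis by (rule span_upto_I)
qed

lemma span_upto_diff:
  assumes "x \<in> span_upto n g" "y \<in> span_upto n g"
  shows "x - y \<in> span_upto n g"
proof -
  obtain c d where "x = (\<Sum>j<n. c j *\<^sub>C g j)" "y = (\<Sum>j<n. d j *\<^sub>C g j)"
    using assms unfolding span_upto_def by blast
  then have "x - y = (\<Sum>j<n. (c j - d j) *\<^sub>C g j)"
    by (simp add: sum_subtractf cscale_diff_left)
  then show ?thesis by (rule span_upto_I)
qed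

lemma span_upto_cscale:
  assumes "x \<in> span_upto n g"
  shows "a *\<^sub>C x \<in> span_upto n g"
proof -
  obtain c where "x = (\<Sum>j<n. c j *\<^sub>C g j)"
    using assms unfolding span_upto_def by blast
  then have "a *\<^sub>C x = (\<Sum>j<n. (a * c j) *\<^sub>C g j)"
    by (simp add: cscale_sum_right cscale_cscale)
  then show ?thesis by (rule span_upto_I)
qed

lemma span_upto_zero: "0 \<in> span_upto n g"
  by (rule span_upto_I[where c = "\<lambda>_. 0"]) simp

lemma span_upto_sum: "(\<And>i. i \<in> S \<Longrightarrow> f i \<in> span_upto n g) \<Longrightarrow> (\<Sum>i\<in>S. f i) \<in> span_upto n g"
  by (induction S rule: infinite_finite_induct) (auto intro: span_upto_add span_upto_zero)

lemma span_upto_generator: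
  assumes "k < n"
  shows "g k \<in> span_upto n g"
proof -
  have "(\<Sum>j<n. (if j = k then 1 else 0) *\<^sub>C g j) = (\<Sum>j<n. if j = k then g k else 0)"
    by (intro sum.cong) (auto simp: cscale_one)
  then have "g k = (\<Sum>j<n. (if j = k then 1 else 0) *\<^sub>C g j)"
    using assms by simp
  then show ?thesis by (rule span_upto_I)
qed

lemma span_upto_subset:
  assumes "\<And>j. j < k \<Longrightarrow> f j \<in> span_upto m g"
  shows "span_upto k f \<subseteq> span_upto m g"
  using assms unfolding span_upto_def[of k f]
  by (auto intro!: span_upto_sum span_upto_cscale)

lemma span_upto_mono: "k \<le> n \<Longrightarrow> span_upto k g \<subseteq> span_upto n g"
  by (rule span_upto_subset) (simp add: span_upto_generator)

context inner_form
begin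

text \<open>Zero vectors are allowed in an orthonormal family, so that Gram--Schmidt needs no
  case distinction for linearly dependent input.\<close>

definition orthonormal_upto :: "nat \<Rightarrow> (nat \<Rightarrow> 'a) \<Rightarrow> bool" where
  "orthonormal_upto n g \<longleftrightarrow> (\<forall>i<n. g i = 0 \<or> B (g i) (g i) = 1) \<and>
     (\<forall>i<n. \<forall>j<n. i \<noteq> j \<longrightarrow> B (g i) (g j) = 0)"

lemma orthonormal_upto_cscale_self:
  assumes "orthonormal_upto n g" "k < n" "g k = 0 \<Longrightarrow> v = 0"
  shows "B (g k) (g k) *\<^sub>C v = v"
  using assms by (auto simp: orthonormal_upto_def cscale_one)

lemma orthonormal_upto_coeff:
  assumes "orthonormal_upto n g" "k < n"
  shows "B (g k) (\<Sum>j<n. c j *\<^sub>C g j) = c k * B (g k) (g k)"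
proof -
  have "B (g k) (\<Sum>j<n. c j *\<^sub>C g j) = (\<Sum>j<n. c j * B (g k) (g j))"
    by (simp add: sum_right scale_right)
  also have "\<dots> = c k * B (g k) (g k)"
    using assms by (subst sum.remove[of _ k]) (auto simp: orthonormal_upto_def intro!: sum.neutral)
  finally show ?thesis .
qed

lemma orthonormal_upto_expansion:
  assumes "orthonormal_upto n g" "y \<in> span_upto n g"
  shows "y = (\<Sum>k<n. B (g k) y *\<^sub>C g k)"
proof -
  obtain c where y: "y = (\<Sum>j<n. c j *\<^sub>C g j)"
    using assms(2) unfolding span_upto_def by blast
  have "B (g k) y *\<^sub>C g k = c k *\<^sub>C g k" if "k < n" for k
    using orthonormal_upto_cscale_self[OF assms(1) that, of "c k *\<^sub>C g k"]
    by (simp add: y orthonormal_upto_coeff[OF assms(1) that] cscale_cscale mult.commute)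
  then show ?thesis by (simp add: y)
qed

lemma orthonormal_upto_in_span_eq_zero:
  assumes "orthonormal_upto n g" "k < n" "g k \<in> span_upto k g"
  shows "g k = 0"
proof -
  obtain c where gk: "g k = (\<Sum>j<k. c j *\<^sub>C g j)"
    using assms(3) unfolding span_upto_def by blast
  have "B (g k) (g k) = (\<Sum>j<k. c j * B (g k) (g j))"
    by (subst (2) gk) (simp add: sum_right scale_right)
  also have "\<dots> = 0"
    using assms(1,2) by (intro sum.neutral) (auto simp: orthonormal_upto_def)
  finally show ?thesis by (simp add: self_eq_zero)
qed

definition unitize :: "'a \<Rightarrow> 'a" where
  "unitize v = (if v = 0 then 0 else complex_of_real (1 / sqrt (Re (B v v))) *\<^sub>C v)"

lemma unitize_eq_zero_iff [simp]: "unitize v = 0 \<longleftrightarrow> v = 0"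
  using Re_self_pos[of v] by (auto simp: unitize_def cscale_eq_zero_iff)

lemma unitize_self:
  assumes "v \<noteq> 0"
  shows "B (unitize v) (unitize v) = 1"
proof -
  define r where "r = Re (B v v)"
  have "r > 0" using Re_self_pos[OF assms] by (simp add: r_def)
  then have sq: "complex_of_real (sqrt r) * complex_of_real (sqrt r) = complex_of_real r"
    by (simp flip: of_real_mult)
  have "B (unitize v) (unitize v) = complex_of_real (1 / sqrt r * (1 / sqrt r * r))"
    using assms self_real[of v] \<open>r > 0\<close>
    by (simp add: sq unitize_def scale_left scale_right r_def[symmetric] mult.assoc)
  also have "1 / sqrt r * (1 / sqrt r * r) = 1"
    using \<open>r > 0\<close> by (simp add: field_simps)
  finally show ?thesis by simp
qed

lemma unitize_rescale: "complex_of_real (sqrt (Re (B v v))) *\<^sub>C unitize v = v"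
proof (cases "v = 0")
  case False
  then show ?thesis
    using Re_self_pos[of v]
    by (simp add: unitize_def cscale_cscale of_real_mult[symmetric] cscale_one del: of_real_mult)
qed (simp add: unitize_def)

fun gram_schmidt :: "(nat \<Rightarrow> 'a) \<Rightarrow> nat \<Rightarrow> 'a" where
  "gram_schmidt e k = unitize (e k - (\<Sum>j\<leftarrow>[0..<k]. B (gram_schmidt e j) (e k) *\<^sub>C gram_schmidt e j))"

declare gram_schmidt.simps [simp del]

definition gs_residual :: "(nat \<Rightarrow> 'a) \<Rightarrow> nat \<Rightarrow> 'a" where
  "gs_residual e k = e k - (\<Sum>j<k. B (gram_schmidt e j) (e k) *\<^sub>C gram_schmidt e j)"

lemma gram_schmidt_eq: "gram_schmidt e k = unitize (gs_residual e k)"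
  by (simp add: gram_schmidt.simps[of e k] gs_residual_def interv_sum_list_conv_sum_set_nat
      atLeast0LessThan)


lemma gram_schmidt_orthonormal: "orthonormal_upto n (gram_schmidt e)"
proof (induction n)
  case 0
  then show ?case by (simp add: orthonormal_upto_def)
next
  case (Suc n)
  let ?g = "gram_schmidt e"
  have "B (?g j) (gs_residual e n) = 0" if "j < n" for j
  proof -
    have "B (?g j) (gs_residual e n)
          = B (?g j) (e n) - B (?g j) (\<Sum>i<n. B (?g i) (e n) *\<^sub>C ?g i)"
      by (simp add: gs_residual_def diff_right)
    also have "B (?g j) (\<Sum>i<n. B (?g i) (e n) *\<^sub>C ?g i) = B (?g j) (e n) * B (?g j) (?g j)"
      by (rule orthonormal_upto_coeff[OF Suc.IH that])
    finally show ?thesis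
      using Suc.IH that by (auto simp: orthonormal_upto_def)
  qed
  then have orth: "B (?g j) (?g n) = 0" if "j < n" for j
    using that by (simp add: gram_schmidt_eq unitize_def scale_right)
  then have "B (?g n) (?g j) = 0" if "j < n" for j
    using that conj_sym[of "?g n" "?g j"] by simp
  moreover have "?g n = 0 \<or> B (?g n) (?g n) = 1"
    by (metis gram_schmidt_eq unitize_eq_zero_iff unitize_self)
  ultimately show ?case
    using Suc.IH orth unfolding orthonormal_upto_def by (auto simp: less_Suc_eq)
qed

lemma gram_schmidt_expansion: "e k = (\<Sum>j<Suc k. B (gram_schmidt e j) (e k) *\<^sub>C gram_schmidt e j)"
proof -
  let ?g = "gram_schmidt e" and ?r = "gs_residual e k"
  have "B (?g k) (e k) *\<^sub>C ?g k = ?r"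
  proof (cases "?r = 0")
    case False
    have "B (?g k) (\<Sum>j<k. B (?g j) (e k) *\<^sub>C ?g j) = 0"
      using gram_schmidt_orthonormal[of "Suc k" e]
      by (auto simp: sum_right scale_right orthonormal_upto_def intro!: sum.neutral)
    then have "B (?g k) (e k) = B (?g k) ?r"
      by (simp add: gs_residual_def diff_right)
    also have "\<dots> = complex_of_real (sqrt (Re (B ?r ?r)))"
    proof -
      define \<rho> where "\<rho> = Re (B ?r ?r)"
      have "0 < \<rho>" "B ?r ?r = complex_of_real \<rho>"
        using Re_self_pos[OF False] self_real[of ?r] by (simp_all add: \<rho>_def)
      then show ?thesis
        by (simp add: gram_schmidt_eq unitize_def scale_left False \<rho>_def[symmetric] real_div_sqrt less_imp_le
            flip: of_real_mult of_real_divide)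
    qed
    finally show ?thesis
      using unitize_rescale[of ?r] by (simp add: gram_schmidt_eq)
  qed (simp add: gram_schmidt_eq unitize_def)
  then show ?thesis by (simp add: gs_residual_def)
qed

lemma in_span_upto_gram_schmidt:
  assumes "k < n"
  shows "e k \<in> span_upto n (gram_schmidt e)"
proof -
  have "e k \<in> span_upto (Suc k) (gram_schmidt e)"
    by (rule span_upto_I[OF gram_schmidt_expansion])
  then show ?thesis
    using span_upto_mono[of "Suc k" n] assms by auto
qed

lemma gram_schmidt_in_span_upto: "gram_schmidt e k \<in> span_upto (Suc k) e"
proof (induction k rule: less_induct)
  case (less k)
  have "gram_schmidt e j \<in> span_upto (Suc k) e" if "j < k" for j
    using less[OF that] span_upto_mono[of "Suc j" "Suc k" e] that by auto
  then have "gs_residual e k \<in> span_upto (Suc k) e"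
    unfolding gs_residual_def
    by (intro span_upto_diff span_upto_generator span_upto_sum span_upto_cscale) auto
  then show ?case
    by (simp add: gram_schmidt_eq unitize_def span_upto_cscale span_upto_zero)
qed

lemma gram_schmidt_eq_zero_iff: "gram_schmidt e k = 0 \<longleftrightarrow> e k \<in> span_upto k e"
proof
  assume "gram_schmidt e k = 0"
  then have "gs_residual e k = 0" by (simp add: gram_schmidt_eq)
  then have "e k = (\<Sum>j<k. B (gram_schmidt e j) (e k) *\<^sub>C gram_schmidt e j)"
    unfolding gs_residual_def by (rule right_minus_eq[THEN iffD1])
  also have "\<dots> \<in> span_upto k e"
  proof (intro span_upto_sum span_upto_cscale)
    show "gram_schmidt e j \<in> span_upto k e" if "j \<in> {..<k}" for j
      using gram_schmidt_in_span_upto[of e j] span_upto_mono[of "Suc j" k e] that by auto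
  qed
  finally show "e k \<in> span_upto k e" .
next
  assume "e k \<in> span_upto k e"
  moreover have "span_upto k e \<subseteq> span_upto k (gram_schmidt e)"
    by (intro span_upto_subset in_span_upto_gram_schmidt)
  ultimately have "e k = (\<Sum>j<k. B (gram_schmidt e j) (e k) *\<^sub>C gram_schmidt e j)"
    by (intro orthonormal_upto_expansion[OF gram_schmidt_orthonormal]) auto
  then have "gs_residual e k = 0"
    unfolding gs_residual_def by (rule right_minus_eq[THEN iffD2])
  then show "gram_schmidt e k = 0"
    by (simp add: gram_schmidt_eq)
qed

end


definition is_onb :: "nat \<Rightarrow> (nat \<Rightarrow> 'a::cinner_space) \<Rightarrow> bool" where
  "is_onb n e \<longleftrightarrow> cinner.orthonormal_upto n e \<and> span_upto n e = UNIV"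

lemma onb_expansion: "is_onb n e \<Longrightarrow> x = (\<Sum>k<n. cinner (e k) x *\<^sub>C e k)"
  unfolding is_onb_def by (intro cinner.orthonormal_upto_expansion) auto

lemma onb_exists:
  assumes "finite_dim TYPE('a)"
  obtains n and e :: "nat \<Rightarrow> 'a::cinner_space" where "is_onb n e"
proof -
  obtain S :: "'a set" where "finite S" and S: "lin_span S = UNIV"
    using assms unfolding finite_dim_def by blast
  then obtain xs where "set xs = S" using finite_list by blast
  define f where "f i = xs ! i" for i
  have "lin_span S \<subseteq> span_upto (length xs) (cinner.gram_schmidt f)"
  proof
    fix x assume "x \<in> lin_span S"
    then obtain m c v where x: "x = (\<Sum>i<(m::nat). c i *\<^sub>C v i)" and v: "\<forall>i<m. v i \<in> S"
      unfolding lin_span_def by blast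
    have "v i \<in> span_upto (length xs) (cinner.gram_schmidt f)" if i: "i < m" for i
    proof -
      obtain j where "j < length xs" "v i = f j"
        using v i \<open>set xs = S\<close> by (force simp: in_set_conv_nth f_def)
      then show ?thesis by (simp add: cinner.in_span_upto_gram_schmidt)
    qed
    then show "x \<in> span_upto (length xs) (cinner.gram_schmidt f)"
      unfolding x by (auto intro: span_upto_sum span_upto_cscale)
  qed
  then have "is_onb (length xs) (cinner.gram_schmidt f)"
    using S cinner.gram_schmidt_orthonormal by (auto simp: is_onb_def)
  then show ?thesis by (rule that)
qed

lemma finite_dim_bounded_clinear:
  fixes L :: "'a::cinner_space \<Rightarrow> 'b::cinner_space"
  assumes "finite_dim TYPE('a)" and "clinear L"
  shows "bounded_clinear L"
proof -
  obtain n and e :: "nat \<Rightarrow> 'a" where onb: "is_onb n e"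
    using onb_exists[OF assms(1)] by blast
  define K where "K = (\<Sum>k<n. cnorm (e k) * cnorm (L (e k)))"
  have "cnorm (L x) \<le> K * cnorm x" for x
  proof -
    have "L x = (\<Sum>k<n. cinner (e k) x *\<^sub>C L (e k))"
      by (subst onb_expansion[OF onb, of x]) (simp add: assms(2) clinear_sum clinear_cscale)
    then have "cnorm (L x) \<le> (\<Sum>k<n. cmod (cinner (e k) x) * cnorm (L (e k)))"
      using cnorm_sum by (metis (no_types, lifting) cnorm_cscale sum.cong)
    also have "\<dots> \<le> (\<Sum>k<n. cnorm (e k) * cnorm x * cnorm (L (e k)))"
      by (intro sum_mono mult_right_mono norm_cinner_le cnorm_nonneg)
    also have "\<dots> = K * cnorm x"
      by (simp add: K_def sum_distrib_left algebra_simps)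
    finally show ?thesis .
  qed
  then show ?thesis
    using assms(2) unfolding bounded_clinear_def by blast
qed

definition onb_trace :: "nat \<Rightarrow> (nat \<Rightarrow> 'a::cinner_space) \<Rightarrow> ('a \<Rightarrow> 'a) \<Rightarrow> complex" where
  "onb_trace n e X = (\<Sum>i<n. cinner (e i) (X (e i)))"

lemma onb_trace_comp_commute:
  assumes onb: "is_onb n e" and "clinear X" "clinear Y"
  shows "onb_trace n e (X \<circ> Y) = onb_trace n e (Y \<circ> X)"
proof -
  have expand: "cinner (e i) (X (Y (e i))) = (\<Sum>j<n. cinner (e j) (Y (e i)) * cinner (e i) (X (e j)))"
    if "clinear X" for X Y i
    by (subst onb_expansion[OF onb, of "Y (e i)"])
      (simp add: that clinear_sum clinear_cscale cinner.sum_right cinner.scale_right)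
  have "onb_trace n e (X \<circ> Y) = (\<Sum>i<n. \<Sum>j<n. cinner (e j) (Y (e i)) * cinner (e i) (X (e j)))"
    unfolding onb_trace_def by (simp add: expand[OF assms(2)])
  also have "\<dots> = (\<Sum>j<n. \<Sum>i<n. cinner (e i) (X (e j)) * cinner (e j) (Y (e i)))"
    by (subst sum.swap) (simp add: mult.commute)
  also have "\<dots> = onb_trace n e (Y \<circ> X)"
    unfolding onb_trace_def by (simp add: expand[OF assms(3)])
  finally show ?thesis .
qed


definition positive_op :: "('a::cinner_space \<Rightarrow> 'a) \<Rightarrow> bool" where
  "positive_op P \<longleftrightarrow> clinear P \<and> (\<forall>x. cnonneg (cinner x (P x)))"

definition effect :: "('a::cinner_space \<Rightarrow> 'a) \<Rightarrow> bool" where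
  "effect P \<longleftrightarrow> positive_op P \<and> positive_op (\<lambda>x. x - P x)"

text \<open>Polarization: a complex inner product is determined by its quadratic form, so an
  operator with real quadratic form is hermitian.\<close>

lemma positive_op_hermitian:
  assumes "positive_op P"
  shows "cinner x (P y) = cnj (cinner y (P x))"
proof -
  have P: "clinear P" and im: "\<And>z. Im (cinner z (P z)) = 0"
    using assms by (auto simp: positive_op_def cnonneg_def)
  define a b where "a = cinner x (P y)" and "b = cinner y (P x)"
  have "cinner (x + y) (P (x + y)) = cinner x (P x) + a + b + cinner y (P y)"
    by (simp add: a_def b_def clinear_add[OF P] cinner.add_left cinner.add_right)
  then have "Im (a + b) = 0" using im[of "x + y"] im[of x] im[of y] by simp
  moreover
  have "cinner (x + \<i> *\<^sub>C y) (P (x + \<i> *\<^sub>C y)) = cinner x (P x) + \<i> * a - \<i> * b + cinner y (P y)"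
    by (simp add: a_def b_def clinear_add[OF P] clinear_cscale[OF P] cinner.add_left cinner.add_right
        cinner.scale_left cinner.scale_right algebra_simps)
  then have "Im (\<i> * a - \<i> * b) = 0" using im[of "x + \<i> *\<^sub>C y"] im[of x] im[of y] by simp
  ultimately show ?thesis by (simp add: a_def[symmetric] b_def[symmetric] complex_eq_iff)
qed

lemma positive_op_self_adjoint: "positive_op P \<Longrightarrow> cinner x (P y) = cinner (P x) y"
  by (metis positive_op_hermitian cinner.conj_sym)

lemma positive_op_semi_inner_form:
  assumes "positive_op P"
  shows "semi_inner_form (\<lambda>x y. cinner x (P y))"
proof
  have P: "clinear P" using assms by (simp add: positive_op_def)
  show "cinner x (P y) = cnj (cinner y (P x))" for x y
    using assms by (rule positive_op_hermitian)
  show "cinner x (P (y + z)) = cinner x (P y) + cinner x (P z)" for x y z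
    by (simp add: clinear_add[OF P] cinner.add_right)
  show "cinner x (P (c *\<^sub>C y)) = c * cinner x (P y)" for x c y
    by (simp add: clinear_cscale[OF P] cinner.scale_right)
  show "cnonneg (cinner x (P x))" for x
    using assms by (simp add: positive_op_def)
qed

lemma positive_op_eq_zero:
  assumes "positive_op P" and "Re (cinner y (P y)) = 0"
  shows "P y = 0"
proof -
  interpret P: semi_inner_form "\<lambda>x y. cinner x (P y)"
    using assms(1) by (rule positive_op_semi_inner_form)
  have "(cmod (cinner (P y) (P y)))\<^sup>2 \<le> 0"
    using P.Cauchy_Schwarz[of "P y" y] assms(2) by simp
  then show ?thesis by (simp add: cinner.self_eq_zero)
qed

lemma effect_sub_square_positive:
  assumes "effect \<mu>"
  shows "positive_op (\<lambda>x. \<mu> x - \<mu> (\<mu> x))"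
proof -
  have \<mu>: "positive_op \<mu>" and \<nu>: "positive_op (\<lambda>x. x - \<mu> x)"
    using assms by (auto simp: effect_def)
  have lin: "clinear \<mu>" using \<mu> by (simp add: positive_op_def)
  interpret \<mu>: semi_inner_form "\<lambda>x y. cinner x (\<mu> y)"
    using \<mu> by (rule positive_op_semi_inner_form)
  have "cnonneg (cinner z (\<mu> z - \<mu> (\<mu> z)))" for z
  proof -
    define a where "a = Re (cinner (\<mu> z) (\<mu> z))"
    have eq: "cinner z (\<mu> z - \<mu> (\<mu> z)) = cinner z (\<mu> z) - cinner (\<mu> z) (\<mu> z)"
      by (simp add: cinner.diff_right positive_op_self_adjoint[OF \<mu>])
    have "Re (cinner (\<mu> z) (\<mu> (\<mu> z))) \<le> a"
      using \<nu> unfolding positive_op_def cnonneg_def a_def by (simp add: cinner.diff_right)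
    moreover have "cmod (cinner (\<mu> z) (\<mu> z)) = a"
      using cinner.self_real[of "\<mu> z"] cinner.Re_self_nonneg[of "\<mu> z"]
      by (metis a_def abs_of_nonneg norm_of_real)
    then have "a\<^sup>2 \<le> Re (cinner (\<mu> z) (\<mu> (\<mu> z))) * Re (cinner z (\<mu> z))"
      using \<mu>.Cauchy_Schwarz[of "\<mu> z" z] by simp
    ultimately have "a\<^sup>2 \<le> a * Re (cinner z (\<mu> z))"
      using \<mu>.Re_self_nonneg[of z] by (meson mult_right_mono order_trans)
    then have "a \<le> Re (cinner z (\<mu> z))"
      using cinner.Re_self_nonneg[of "\<mu> z"] \<mu>.Re_self_nonneg[of z]
      by (cases "a = 0") (auto simp: a_def power2_eq_square)
    then show ?thesis
      using \<mu>.self_nonneg[of z] cinner.self_nonneg[of "\<mu> z"] by (simp add: eq cnonneg_def a_def)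
  qed
  moreover have "clinear (\<lambda>x. \<mu> x - \<mu> (\<mu> x))"
    by (simp add: clinear_def clinear_add[OF lin] clinear_cscale[OF lin] cscale_diff_right)
  ultimately show ?thesis by (simp add: positive_op_def)
qed


lemma positive_op_congruence:
  fixes S :: "'a::chilbert \<Rightarrow> 'b::cinner_space"
  assumes "positive_op P" and "bounded_clinear S"
  shows "positive_op (\<lambda>x. adj S (P (S x)))"
proof -
  have "clinear (adj S \<circ> P \<circ> S)"
    using assms clinear_adj[OF assms(2)]
    by (intro clinear_comp) (auto simp: positive_op_def bounded_clinear_def)
  then show ?thesis
    using assms by (simp add: positive_op_def comp_def cinner_adj_right[OF assms(2), symmetric])
qed

lemma positive_op_trace_eq_zero:
  assumes onb: "is_onb n e" and "positive_op P" and "onb_trace n e P = 0"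
  shows "P x = 0"
proof -
  have nonneg: "0 \<le> Re (cinner (e i) (P (e i)))" for i
    using assms(2) by (simp add: positive_op_def cnonneg_def)
  have "(\<Sum>i<n. Re (cinner (e i) (P (e i)))) = 0"
    using arg_cong[OF assms(3), of Re] by (simp add: onb_trace_def Re_sum)
  then have "Re (cinner (e i) (P (e i))) = 0" if "i < n" for i
    using sum_nonneg_eq_0_iff[of "{..<n}" "\<lambda>i. Re (cinner (e i) (P (e i)))"] nonneg that by simp
  then have "P (e i) = 0" if "i < n" for i
    using that assms(2) by (simp add: positive_op_eq_zero)
  moreover have "P x = (\<Sum>i<n. cinner (e i) x *\<^sub>C P (e i))"
    using assms(2) by (subst onb_expansion[OF onb, of x]) (simp add: positive_op_def clinear_sum clinear_cscale)
  ultimately show ?thesis by simp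
qed

lemma inner_form_isometric:
  fixes B :: "'a::cinner_space \<Rightarrow> 'a \<Rightarrow> complex" and e :: "nat \<Rightarrow> 'a"
  assumes "inner_form B" and onb: "is_onb n e"
  obtains T S :: "'a \<Rightarrow> 'a" where "clinear T" "clinear S" "\<And>x. S (T x) = x" "\<And>y. T (S y) = y"
    "\<And>x y. cinner (T x) (T y) = B x y"
proof -
  interpret B: inner_form B by fact
  define f where "f = B.gram_schmidt e"
  have e_on: "cinner.orthonormal_upto n e" and e_span: "span_upto n e = UNIV"
    using onb by (auto simp: is_onb_def)
  have f_on: "B.orthonormal_upto n f"
    unfolding f_def by (rule B.gram_schmidt_orthonormal)
  have zero: "f k = 0 \<longleftrightarrow> e k = 0" if "k < n" for k
    using cinner.orthonormal_upto_in_span_eq_zero[OF e_on that] span_upto_zero[of k e]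
    unfolding f_def B.gram_schmidt_eq_zero_iff by auto
  have f_exp: "x = (\<Sum>k<n. B (f k) x *\<^sub>C f k)" for x
  proof (rule B.orthonormal_upto_expansion[OF f_on])
    have "span_upto n e \<subseteq> span_upto n f"
      unfolding f_def by (intro span_upto_subset B.in_span_upto_gram_schmidt)
    then show "x \<in> span_upto n f" using e_span by auto
  qed
  define T where "T x = (\<Sum>k<n. B (f k) x *\<^sub>C e k)" for x
  define S where "S y = (\<Sum>k<n. cinner (e k) y *\<^sub>C f k)" for y
  have T_coeff: "cinner (e j) (T x) = B (f j) x" if "j < n" for j x
    using e_on that zero[OF that]
    by (simp add: T_def cinner.orthonormal_upto_coeff[OF e_on that]) (auto simp: cinner.orthonormal_upto_def)
  have S_coeff: "B (f j) (S y) = cinner (e j) y" if "j < n" for j y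
    using f_on that zero[OF that]
    by (simp add: S_def B.orthonormal_upto_coeff[OF f_on that]) (auto simp: B.orthonormal_upto_def)
  have lin_T: "clinear T"
    by (simp add: clinear_def T_def B.add_right B.scale_right cscale_add_left sum.distrib
        cscale_sum_right cscale_cscale)
  have lin_S: "clinear S"
    by (simp add: clinear_def S_def cinner.add_right cinner.scale_right cscale_add_left sum.distrib
        cscale_sum_right cscale_cscale)
  have ST: "S (T x) = x" for x
    by (subst (2) f_exp[of x]) (simp add: S_def T_coeff)
  have TS: "T (S y) = y" for y
    by (subst (2) onb_expansion[OF onb, of y]) (simp add: T_def S_coeff)
  have iso: "cinner (T x) (T y) = B x y" for x y
  proof -
    have "cinner (T x) (T y) = (\<Sum>k<n. B (f k) y * cnj (B (f k) x))"
      using T_coeff cinner.conj_sym[of "T x" "e k" for k]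
      by (simp add: T_def[of y] cinner.sum_right cinner.scale_right)
    also have "\<dots> = B (\<Sum>k<n. B (f k) x *\<^sub>C f k) y"
      by (simp add: B.sum_left B.scale_left mult.commute)
    also have "\<dots> = B x y"
      using f_exp[of x, symmetric] by simp
    finally show ?thesis .
  qed
  show ?thesis by (rule that[OF lin_T lin_S ST TS iso])
qed

lemma positive_definite_factorization:
  fixes G :: "'a::chilbert \<Rightarrow> 'a"
  assumes fd: "finite_dim TYPE('a)" and G: "positive_op G"
    and definite: "\<And>x. x \<noteq> 0 \<Longrightarrow> 0 < Re (cinner x (G x))"
  obtains T S :: "'a \<Rightarrow> 'a" where "bounded_clinear T" "bounded_clinear S" "\<And>x. S (T x) = x" "\<And>y. T (S y) = y"
    "\<And>x. adj T (T x) = G x"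
proof -
  have "cinner x (G x) = 0 \<longleftrightarrow> x = 0" for x
  proof
    show "x = 0" if "cinner x (G x) = 0"
      using definite[of x] that by (cases "x = 0") simp_all
    show "cinner x (G x) = 0" if "x = 0"
      using that G clinear_zero[of G] by (simp add: positive_op_def)
  qed
  then have inner: "inner_form (\<lambda>x y. cinner x (G y))"
    using positive_op_semi_inner_form[OF G] unfolding inner_form_def inner_form_axioms_def by blast
  obtain n and e :: "nat \<Rightarrow> 'a" where onb: "is_onb n e"
    using onb_exists[OF fd] by blast
  obtain T S :: "'a \<Rightarrow> 'a" where T: "clinear T" "clinear S" "\<And>x. S (T x) = x" "\<And>y. T (S y) = y"
    and iso: "\<And>x y. cinner (T x) (T y) = cinner x (G y)"
    using inner_form_isometric[OF inner onb] by blast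
  have bounded: "bounded_clinear T" "bounded_clinear S"
    using T(1,2) by (simp_all add: finite_dim_bounded_clinear[OF fd])
  have "adj T (T x) = G x" for x
    by (rule cinner.ext) (simp add: cinner_adj_right[OF bounded(1), symmetric] iso)
  then show ?thesis by (rule that[OF bounded T(3,4)])
qed

lemma bounded_clinear_add:
  assumes "bounded_clinear f" "bounded_clinear g"
  shows "bounded_clinear (\<lambda>x. f x + g x)"
proof -
  obtain K L where K: "\<And>x. cnorm (f x) \<le> K * cnorm x" and L: "\<And>x. cnorm (g x) \<le> L * cnorm x"
    using assms by (auto simp: bounded_clinear_def)
  have "cnorm (f x + g x) \<le> (K + L) * cnorm x" for x
    using cnorm_triangle[of "f x" "g x"] K[of x] L[of x] by (simp add: distrib_right)
  moreover have "clinear (\<lambda>x. f x + g x)"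
    using assms by (auto simp: bounded_clinear_def clinear_def algebra_simps cscale_add_right)
  ultimately show ?thesis unfolding bounded_clinear_def by blast
qed

lemma bounded_clinear_cscale:
  assumes "bounded_clinear f"
  shows "bounded_clinear (\<lambda>x. c *\<^sub>C f x)"
proof -
  obtain K where "\<And>x. cnorm (f x) \<le> K * cnorm x"
    using assms by (auto simp: bounded_clinear_def)
  then have "cnorm (c *\<^sub>C f x) \<le> (cmod c * K) * cnorm x" for x
    by (simp add: cnorm_cscale mult.assoc mult_left_mono)
  moreover have "clinear (\<lambda>x. c *\<^sub>C f x)"
    using assms by (auto simp: bounded_clinear_def clinear_def cscale_add_right cscale_cscale mult.commute)
  ultimately show ?thesis unfolding bounded_clinear_def by blast
qed

lemma countably_additive_c_empty:
  assumes "countably_additive_c M \<mu>"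
  shows "\<mu> {} = 0"
proof -
  have "(\<lambda>n::nat. \<mu> {}) sums \<mu> {}"
    using assms unfolding countably_additive_c_def by (auto simp: disjoint_family_on_def)
  then have "(\<lambda>n::nat. \<mu> {}) \<longlonglongrightarrow> 0"
    by (intro summable_LIMSEQ_zero sums_summable)
  then show ?thesis
    using LIMSEQ_unique[OF tendsto_const] by blast
qed

lemma countably_additive_c_Un:
  assumes ca: "countably_additive_c M \<mu>" and "A \<in> sets M" "B \<in> sets M" "A \<inter> B = {}"
  shows "\<mu> (A \<union> B) = \<mu> A + \<mu> B"
proof -
  define F where "F n = (if n = 0 then A else if n = 1 then B else {})" for n :: nat
  have "range F \<subseteq> sets M" and "disjoint_family F"
    using assms by (auto simp: F_def disjoint_family_on_def)
  then have "(\<lambda>n. \<mu> (F n)) sums \<mu> (\<Union>n. F n)"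
    using ca unfolding countably_additive_c_def by blast
  moreover have "(\<Union>n. F n) = A \<union> B"
    by (auto simp: F_def split: if_splits)
  ultimately have "(\<lambda>n. \<mu> (F n)) sums \<mu> (A \<union> B)"
    by simp
  moreover have "(\<lambda>n. \<mu> (F n)) sums (\<Sum>n\<in>{0, 1}. \<mu> (F n))"
    using countably_additive_c_empty[OF ca] by (intro sums_finite) (auto simp: F_def)
  ultimately show ?thesis by (simp add: sums_unique2 F_def)
qed

lemma cp_instrument_empty:
  assumes "cp_instrument M I"
  shows "I {} a x = 0"
proof (rule cinner.ext)
  fix z
  have "countably_additive_c M (\<lambda>A. cinner z (I A a x))"
    using assms by (simp add: cp_instrument_def)
  from countably_additive_c_empty[OF this] show "cinner z (I {} a x) = cinner z 0" by simp
qed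

lemma cp_instrument_Un:
  assumes "cp_instrument M I" "A \<in> sets M" "B \<in> sets M" "A \<inter> B = {}"
  shows "I (A \<union> B) a x = I A a x + I B a x"
proof (rule cinner.ext)
  fix z
  have "countably_additive_c M (\<lambda>A. cinner z (I A a x))"
    using assms by (simp add: cp_instrument_def)
  from countably_additive_c_Un[OF this assms(2-4)]
  show "cinner z (I (A \<union> B) a x) = cinner z (I A a x + I B a x)"
    by (simp add: cinner.add_right)
qed

lemma cstar_one: "cstar (1::'a::cstar_algebra) = 1"
  by (metis cstar_cstar cstar_mult mult_1_right)

lemma cp_map_unit_positive:
  fixes \<phi> :: "'a::cstar_algebra \<Rightarrow> 'h::chilbert \<Rightarrow> 'h"
  assumes "cp_map \<phi>"
  shows "positive_op (\<phi> 1)"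
proof -
  have "cnonneg (cinner x (\<phi> 1 x))" for x
    using assms[unfolded cp_map_def, THEN conjunct2, THEN conjunct2, THEN conjunct2,
        rule_format, where n = "Suc 0" and B = "\<lambda>_ _. 1" and x = "\<lambda>_. x"]
    by (simp add: cstar_one)
  then show ?thesis
    using assms by (simp add: positive_op_def cp_map_def bounded_clinear_def)
qed

lemma ucp_instrument_complement:
  assumes "ucp_instrument M I" "A \<in> sets M"
  shows "I (space M - A) 1 x = x - I A 1 x"
proof -
  have "I (A \<union> (space M - A)) 1 x = I A 1 x + I (space M - A) 1 x"
    using assms by (intro cp_instrument_Un) (auto simp: ucp_instrument_def)
  moreover have "A \<union> (space M - A) = space M"
    using sets.sets_into_space[OF assms(2)] by auto
  ultimately show ?thesis
    using assms(1) by (simp add: ucp_instrument_def algebra_simps)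
qed

lemma ucp_instrument_effect:
  assumes "ucp_instrument M I" "A \<in> sets M"
  shows "effect (I A 1)"
proof -
  have "cp_map (I A)" "cp_map (I (space M - A))"
    using assms by (auto simp: ucp_instrument_def cp_instrument_def)
  then have "positive_op (I A 1)" "positive_op (I (space M - A) 1)"
    by (simp_all add: cp_map_unit_positive)
  moreover have "I (space M - A) 1 = (\<lambda>x. x - I A 1 x)"
    using ucp_instrument_complement[OF assms] by (simp add: fun_eq_iff)
  ultimately show ?thesis by (simp add: effect_def)
qed


lemma countably_additive_c_restrict:
  assumes ca: "countably_additive_c M \<mu>" and "B \<in> sets M"
  shows "countably_additive_c M (\<lambda>A. \<mu> (A \<inter> B))" and "countably_additive_c M (\<lambda>A. \<mu> (A - B))"
  unfolding countably_additive_c_def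
proof (safe)
  fix F :: "nat \<Rightarrow> 'a set"
  assume F: "range F \<subseteq> sets M" "disjoint_family F"
  have "range (\<lambda>n. F n \<inter> B) \<subseteq> sets M" "disjoint_family (\<lambda>n. F n \<inter> B)"
    and "range (\<lambda>n. F n - B) \<subseteq> sets M" "disjoint_family (\<lambda>n. F n - B)"
    using F \<open>B \<in> sets M\<close> by (auto simp: disjoint_family_on_def)
  then have "(\<lambda>n. \<mu> (F n \<inter> B)) sums \<mu> (\<Union>n. F n \<inter> B)" "(\<lambda>n. \<mu> (F n - B)) sums \<mu> (\<Union>n. F n - B)"
    using ca unfolding countably_additive_c_def by blast+
  moreover have "(\<Union>n. F n \<inter> B) = (\<Union>n. F n) \<inter> B" "(\<Union>n. F n - B) = (\<Union>n. F n) - B"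
    by auto
  ultimately show "(\<lambda>n. \<mu> (F n \<inter> B)) sums \<mu> ((\<Union>n. F n) \<inter> B)"
    and "(\<lambda>n. \<mu> (F n - B)) sums \<mu> ((\<Union>n. F n) - B)"
    by simp_all
qed

lemma countably_additive_c_lincomb:
  assumes "countably_additive_c M \<mu>" "countably_additive_c M \<nu>"
  shows "countably_additive_c M (\<lambda>A. c * \<mu> A + d * \<nu> A)"
  using assms unfolding countably_additive_c_def by (simp add: sums_add sums_mult)

lemma cnonneg_lincomb:
  "0 \<le> c \<Longrightarrow> 0 \<le> d \<Longrightarrow> cnonneg z \<Longrightarrow> cnonneg w \<Longrightarrow>
    cnonneg (complex_of_real c * z + complex_of_real d * w)"
  by (simp add: cnonneg_def)

lemma cp_map_positive:
  fixes n :: nat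
  shows "cp_map \<phi> \<Longrightarrow> cnonneg (\<Sum>i<n. \<Sum>j<n. cinner (x i) (\<phi> (\<Sum>k<n. cstar (B k i) * B k j) (x j)))"
  unfolding cp_map_def by blast

lemma cp_map_reweight:
  assumes "cp_map \<phi>" "cp_map \<psi>" "0 \<le> c" "0 \<le> d"
  shows "cp_map (\<lambda>a x. complex_of_real c *\<^sub>C \<phi> a x + complex_of_real d *\<^sub>C \<psi> a x)"
  unfolding cp_map_def
proof (intro conjI allI)
  show "(\<lambda>x. of_real c *\<^sub>C \<phi> (a + b) x + of_real d *\<^sub>C \<psi> (a + b) x)
        = (\<lambda>x. (of_real c *\<^sub>C \<phi> a x + of_real d *\<^sub>C \<psi> a x) + (of_real c *\<^sub>C \<phi> b x + of_real d *\<^sub>C \<psi> b x))"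
    for a b
    using assms by (simp add: cp_map_def cscale_add_right algebra_simps)
  show "(\<lambda>x. of_real c *\<^sub>C \<phi> (k *\<^sub>C a) x + of_real d *\<^sub>C \<psi> (k *\<^sub>C a) x)
        = (\<lambda>x. k *\<^sub>C (of_real c *\<^sub>C \<phi> a x + of_real d *\<^sub>C \<psi> a x))" for k a
    using assms by (simp add: cp_map_def cscale_add_right cscale_cscale mult.commute)
  show "bounded_clinear (\<lambda>x. of_real c *\<^sub>C \<phi> a x + of_real d *\<^sub>C \<psi> a x)" for a
    using assms by (intro bounded_clinear_add bounded_clinear_cscale) (simp_all add: cp_map_def)
  show "cnonneg (\<Sum>i<n. \<Sum>j<n. cinner (x i)
          (of_real c *\<^sub>C \<phi> (\<Sum>k<n. cstar (B k i) * B k j) (x j)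
           + of_real d *\<^sub>C \<psi> (\<Sum>k<n. cstar (B k i) * B k j) (x j)))" for n :: nat and B x
  proof -
    have eq: "(\<Sum>i<n. \<Sum>j<n. cinner (x i)
            (of_real c *\<^sub>C \<phi> (\<Sum>k<n. cstar (B k i) * B k j) (x j)
             + of_real d *\<^sub>C \<psi> (\<Sum>k<n. cstar (B k i) * B k j) (x j)))
          = of_real c * (\<Sum>i<n. \<Sum>j<n. cinner (x i) (\<phi> (\<Sum>k<n. cstar (B k i) * B k j) (x j)))
            + of_real d * (\<Sum>i<n. \<Sum>j<n. cinner (x i) (\<psi> (\<Sum>k<n. cstar (B k i) * B k j) (x j)))"
      by (simp add: cinner.add_right cinner.scale_right sum.distrib sum_distrib_left)
    show ?thesis
      unfolding eq
      by (rule cnonneg_lincomb[OF assms(3,4) cp_map_positive[OF assms(1)] cp_map_positive[OF assms(2)]])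
  qed
qed

lemma cp_instrument_reweight:
  fixes I :: "'x set \<Rightarrow> 'a::cstar_algebra \<Rightarrow> 'h::chilbert \<Rightarrow> 'h"
  assumes "cp_instrument M I" "A0 \<in> sets M" "0 \<le> c" "0 \<le> d"
  shows "cp_instrument M (\<lambda>A a x. complex_of_real c *\<^sub>C I (A \<inter> A0) a x + complex_of_real d *\<^sub>C I (A - A0) a x)"
  unfolding cp_instrument_def
proof (intro conjI ballI allI)
  show "cp_map (\<lambda>a x. of_real c *\<^sub>C I (A \<inter> A0) a x + of_real d *\<^sub>C I (A - A0) a x)" if "A \<in> sets M" for A
    using assms that by (intro cp_map_reweight) (auto simp: cp_instrument_def)
  show "countably_additive_c M (\<lambda>A. cinner h (of_real c *\<^sub>C I (A \<inter> A0) a k + of_real d *\<^sub>C I (A - A0) a k))"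
    for a h k
  proof -
    have "countably_additive_c M (\<lambda>A. cinner h (I A a k))"
      using assms(1) by (simp add: cp_instrument_def)
    from countably_additive_c_lincomb[OF countably_additive_c_restrict[OF this assms(2)]]
    show ?thesis by (simp add: cinner.add_right cinner.scale_right)
  qed
qed

lemma cp_instrument_congruence:
  fixes K :: "'x set \<Rightarrow> 'a::cstar_algebra \<Rightarrow> 'g::chilbert \<Rightarrow> 'g" and S :: "'h::chilbert \<Rightarrow> 'g"
  assumes K: "cp_instrument M K" and S: "bounded_clinear S"
  shows "cp_instrument M (\<lambda>A a x. adj S (K A a (S x)))"
  unfolding cp_instrument_def
proof (intro conjI ballI allI)
  have inner: "cinner h (adj S y) = cinner (S h) y" for h y
    by (simp add: cinner_adj_right[OF S])
  show "cp_map (\<lambda>a x. adj S (K A a (S x)))" if "A \<in> sets M" for A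
  proof -
    have \<phi>: "cp_map (K A)" using K that by (simp add: cp_instrument_def)
    have "bounded_clinear (adj S \<circ> K A a \<circ> S)" for a
      using \<phi> S by (intro bounded_clinear_comp bounded_clinear_adj) (simp_all add: cp_map_def)
    then show ?thesis
      using \<phi> clinear_adj[OF S]
      by (simp add: cp_map_def comp_def clinear_add clinear_cscale inner)
  qed
  show "countably_additive_c M (\<lambda>A. cinner h (adj S (K A a (S k))))" for a h k
    using K by (simp add: cp_instrument_def inner)
qed


lemma positive_op_lincomb:
  assumes "positive_op P" "positive_op Q" "0 \<le> c" "0 \<le> d"
  shows "positive_op (\<lambda>x. complex_of_real c *\<^sub>C P x + complex_of_real d *\<^sub>C Q x)"
proof -
  have P: "clinear P" and Q: "clinear Q"
    using assms by (simp_all add: positive_op_def)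
  have "clinear (\<lambda>x. complex_of_real c *\<^sub>C P x + complex_of_real d *\<^sub>C Q x)"
    by (simp add: clinear_def clinear_add[OF P] clinear_add[OF Q] clinear_cscale[OF P] clinear_cscale[OF Q]
        cscale_add_right cscale_cscale mult.commute add_ac)
  moreover have "cnonneg (cinner x (complex_of_real c *\<^sub>C P x + complex_of_real d *\<^sub>C Q x))" for x
    using cnonneg_lincomb[OF assms(3,4)] assms(1,2)
    by (simp add: cinner.add_right cinner.scale_right positive_op_def)
  ultimately show ?thesis by (simp add: positive_op_def)
qed

lemma ucp_instrument_reweighted_compression:
  fixes I :: "'x set \<Rightarrow> 'a::cstar_algebra \<Rightarrow> 'h::chilbert \<Rightarrow> 'h"
  assumes fd: "finite_dim TYPE('h)" and ucp: "ucp_instrument M I" and A0: "A0 \<in> sets M"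
    and "0 < c" "0 < d"
  obtains T S :: "'h \<Rightarrow> 'h" where "bounded_clinear T" "bounded_clinear S" "\<And>x. S (T x) = x"
    "\<And>x. T (S x) = x" "\<And>x. adj T (T x) = of_real c *\<^sub>C I A0 1 x + of_real d *\<^sub>C (x - I A0 1 x)"
    "ucp_instrument M (\<lambda>A a x. adj S (of_real c *\<^sub>C I (A \<inter> A0) a (S x) + of_real d *\<^sub>C I (A - A0) a (S x)))"
proof -
  define G where "G x = of_real c *\<^sub>C I A0 1 x + of_real d *\<^sub>C (x - I A0 1 x)" for x
  have eff: "effect (I A0 1)"
    by (rule ucp_instrument_effect[OF ucp A0])
  then have G: "positive_op G"
    unfolding G_def effect_def using \<open>0 < c\<close> \<open>0 < d\<close> by (intro positive_op_lincomb) auto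
  have definite: "0 < Re (cinner x (G x))" if "x \<noteq> 0" for x
  proof -
    have a: "0 \<le> Re (cinner x (I A0 1 x))" and b: "0 \<le> Re (cinner x (x - I A0 1 x))"
      using eff by (simp_all add: effect_def positive_op_def cnonneg_def)
    have "0 < min c d * Re (cinner x x)"
      using cinner.Re_self_pos[OF that] \<open>0 < c\<close> \<open>0 < d\<close> by simp
    also have "\<dots> = min c d * Re (cinner x (I A0 1 x)) + min c d * Re (cinner x (x - I A0 1 x))"
      by (simp add: cinner.diff_right algebra_simps)
    also have "\<dots> \<le> c * Re (cinner x (I A0 1 x)) + d * Re (cinner x (x - I A0 1 x))"
      using a b by (intro add_mono mult_right_mono) auto
    also have "\<dots> = Re (cinner x (G x))"
      by (simp add: G_def cinner.add_right cinner.scale_right)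
    finally show ?thesis .
  qed
  obtain T S :: "'h \<Rightarrow> 'h" where T: "bounded_clinear T" and S: "bounded_clinear S"
    and ST: "\<And>x. S (T x) = x" and TS: "\<And>x. T (S x) = x" and TT: "\<And>x. adj T (T x) = G x"
    using positive_definite_factorization[OF fd G definite] by blast
  define K where "K A a x = of_real c *\<^sub>C I (A \<inter> A0) a x + of_real d *\<^sub>C I (A - A0) a x" for A a x
  have "cp_instrument M (\<lambda>A a x. adj S (K A a (S x)))"
    using ucp \<open>0 < c\<close> \<open>0 < d\<close> unfolding K_def
    by (intro cp_instrument_congruence cp_instrument_reweight S A0) (auto simp: ucp_instrument_def)
  moreover have "adj S (K (space M) 1 (S x)) = x" for x
  proof -
    have "space M \<inter> A0 = A0" using sets.sets_into_space[OF A0] by auto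
    then have "K (space M) 1 (S x) = adj T (T (S x))"
      using ucp_instrument_complement[OF ucp A0] by (simp add: K_def TT G_def)
    then show ?thesis by (simp add: TS adj_inverse[OF T S TS])
  qed
  ultimately have "ucp_instrument M (\<lambda>A a x. adj S (K A a (S x)))"
    by (simp add: ucp_instrument_def fun_eq_iff)
  then have J: "ucp_instrument M
      (\<lambda>A a x. adj S (of_real c *\<^sub>C I (A \<inter> A0) a (S x) + of_real d *\<^sub>C I (A - A0) a (S x)))"
    by (simp add: K_def)
  have TT': "adj T (T x) = of_real c *\<^sub>C I A0 1 x + of_real d *\<^sub>C (x - I A0 1 x)" for x
    by (simp add: TT G_def)
  show ?thesis by (rule that[OF T S ST TS TT' J])
qed


lemma invertible_opI:
  "bounded_clinear T \<Longrightarrow> bounded_clinear S \<Longrightarrow> (\<And>x. S (T x) = x) \<Longrightarrow> (\<And>x. T (S x) = x) \<Longrightarrow>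
    invertible_op T"
  unfolding invertible_op_def by (auto simp: fun_eq_iff)

lemma cstar_extreme_compression_unitary:
  fixes I :: "'x set \<Rightarrow> 'a::cstar_algebra \<Rightarrow> 'h::chilbert \<Rightarrow> 'h"
  assumes fd: "finite_dim TYPE('h)" and extreme: "cstar_extreme_instrument M I" and A0: "A0 \<in> sets M"
    and "0 < c" "c < 1"
  obtains T S U :: "'h \<Rightarrow> 'h" where "bounded_clinear T" "bounded_clinear S" "\<And>x. S (T x) = x"
    "\<And>x. T (S x) = x" "\<And>x. adj T (T x) = of_real c *\<^sub>C I A0 1 x + of_real (1 - c) *\<^sub>C (x - I A0 1 x)"
    "unitary_op U" "\<And>x. adj S (of_real c *\<^sub>C I A0 1 (S x)) = adj U (I A0 1 (U x))"
proof -
  have ucp: "ucp_instrument M I"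
    using extreme by (simp add: cstar_extreme_instrument_def)
  have "0 < 1 - c" using \<open>c < 1\<close> by simp
  have one: "of_real c *\<^sub>C v + of_real (1 - c) *\<^sub>C v = v" "of_real (1 - c) *\<^sub>C v + of_real c *\<^sub>C v = v"
    for v :: 'h
    using cscale_add_left[of "of_real c" "of_real (1 - c)" v] cscale_add_left[of "of_real (1 - c)" "of_real c" v]
    by (simp_all add: cscale_one)
  obtain T1 S1 :: "'h \<Rightarrow> 'h" where T1: "bounded_clinear T1" and S1: "bounded_clinear S1"
    and ST1: "\<And>x. S1 (T1 x) = x" and TS1: "\<And>x. T1 (S1 x) = x"
    and TT1: "\<And>x. adj T1 (T1 x) = of_real c *\<^sub>C I A0 1 x + of_real (1 - c) *\<^sub>C (x - I A0 1 x)"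
    and J1: "ucp_instrument M (\<lambda>A a x. adj S1 (of_real c *\<^sub>C I (A \<inter> A0) a (S1 x)
                                             + of_real (1 - c) *\<^sub>C I (A - A0) a (S1 x)))"
    using ucp_instrument_reweighted_compression[OF fd ucp A0 \<open>0 < c\<close> \<open>0 < 1 - c\<close>] by blast
  obtain T2 S2 :: "'h \<Rightarrow> 'h" where T2: "bounded_clinear T2" and S2: "bounded_clinear S2"
    and ST2: "\<And>x. S2 (T2 x) = x" and TS2: "\<And>x. T2 (S2 x) = x"
    and TT2: "\<And>x. adj T2 (T2 x) = of_real (1 - c) *\<^sub>C I A0 1 x + of_real c *\<^sub>C (x - I A0 1 x)"
    and J2: "ucp_instrument M (\<lambda>A a x. adj S2 (of_real (1 - c) *\<^sub>C I (A \<inter> A0) a (S2 x)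
                                             + of_real c *\<^sub>C I (A - A0) a (S2 x)))"
    using ucp_instrument_reweighted_compression[OF fd ucp A0 \<open>0 < 1 - c\<close> \<open>0 < c\<close>] by blast
  define J :: "nat \<Rightarrow> 'x set \<Rightarrow> 'a \<Rightarrow> 'h \<Rightarrow> 'h" where
    "J i = (if i = 0
      then (\<lambda>A a x. adj S1 (of_real c *\<^sub>C I (A \<inter> A0) a (S1 x) + of_real (1 - c) *\<^sub>C I (A - A0) a (S1 x)))
      else (\<lambda>A a x. adj S2 (of_real (1 - c) *\<^sub>C I (A \<inter> A0) a (S2 x) + of_real c *\<^sub>C I (A - A0) a (S2 x))))"
    for i
  define T where "T i = (if i = (0::nat) then T1 else T2)" for i
  have hyp1: "ucp_instrument M (J i) \<and> invertible_op (T i)" if "i < 2" for i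
    using J1 J2 invertible_opI[OF T1 S1 ST1 TS1] invertible_opI[OF T2 S2 ST2 TS2] that
    by (auto simp: J_def T_def less_2_cases_iff)
  have hyp2: "(\<Sum>i<2. adj (T i) (T i x)) = x" for x
  proof -
    have "(\<Sum>i<2. adj (T i) (T i x))
        = (of_real c *\<^sub>C I A0 1 x + of_real (1 - c) *\<^sub>C I A0 1 x)
          + (of_real (1 - c) *\<^sub>C (x - I A0 1 x) + of_real c *\<^sub>C (x - I A0 1 x))"
      by (simp add: T_def numeral_2_eq_2 TT1 TT2 add_ac)
    also have "\<dots> = x" by (simp only: one) simp
    finally show ?thesis .
  qed
  have hyp3: "I A a x = (\<Sum>i<2. adj (T i) (J i A a (T i x)))" if "A \<in> sets M" for A a x
  proof -
    have "(\<Sum>i<2. adj (T i) (J i A a (T i x)))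
        = (of_real c *\<^sub>C I (A \<inter> A0) a x + of_real (1 - c) *\<^sub>C I (A \<inter> A0) a x)
          + (of_real (1 - c) *\<^sub>C I (A - A0) a x + of_real c *\<^sub>C I (A - A0) a x)"
      by (simp add: T_def J_def numeral_2_eq_2 ST1 ST2 adj_inverse[OF S1 T1 ST1]
          adj_inverse[OF S2 T2 ST2] add_ac)
    also have "\<dots> = I (A \<inter> A0) a x + I (A - A0) a x"
      by (simp only: one)
    also have "\<dots> = I ((A \<inter> A0) \<union> (A - A0)) a x"
      using ucp A0 that by (intro cp_instrument_Un[symmetric]) (auto simp: ucp_instrument_def)
    also have "\<dots> = I A a x"
      by (simp add: Int_Diff_Un)
    finally show ?thesis by simp
  qed
  have hyp3': "I A a = (\<lambda>x. \<Sum>i<2. adj (T i) (J i A a (T i x)))" if "A \<in> sets M" for A a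
    by (rule ext) (rule hyp3[OF that])
  obtain U where U: "\<forall>i<2. unitary_op (U i) \<and> (\<forall>A\<in>sets M. \<forall>a. J i A a = adj (U i) \<circ> I A a \<circ> U i)"
    using extreme[unfolded cstar_extreme_instrument_def, THEN conjunct2, rule_format, OF hyp1 hyp2 hyp3']
    by blast
  then have "unitary_op (U 0)" and "J 0 A0 1 = adj (U 0) \<circ> I A0 1 \<circ> U 0"
    using A0 by auto
  moreover have "J 0 A0 1 x = adj S1 (of_real c *\<^sub>C I A0 1 (S1 x))" for x
    using cp_instrument_empty[of M I] ucp by (simp add: J_def ucp_instrument_def)
  ultimately show ?thesis
    using that[OF T1 S1 ST1 TS1 TT1] by (simp add: fun_eq_iff)
qed


lemma onb_trace_diff: "onb_trace n e (\<lambda>x. X x - Y x) = onb_trace n e X - onb_trace n e Y"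
  by (simp add: onb_trace_def cinner.diff_right sum_subtractf)

lemma onb_trace_cscale: "onb_trace n e (\<lambda>x. c *\<^sub>C X x) = c * onb_trace n e X"
  by (simp add: onb_trace_def cinner.scale_right sum_distrib_left)

lemma effect_idempotent_if_compression_unitarily_equivalent:
  fixes \<mu> :: "'h::chilbert \<Rightarrow> 'h"
  assumes fd: "finite_dim TYPE('h)" and eff: "effect \<mu>"
    and T: "bounded_clinear T" and S: "bounded_clinear S" and ST: "\<And>x. S (T x) = x"
    and TS: "\<And>x. T (S x) = x"
    and TT: "\<And>x. adj T (T x) = of_real c *\<^sub>C \<mu> x + of_real d *\<^sub>C (x - \<mu> x)" and "c \<noteq> d"
    and U: "unitary_op U" and equiv: "\<And>x. adj S (of_real c *\<^sub>C \<mu> (S x)) = adj U (\<mu> (U x))"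
  shows "\<mu> (\<mu> y) = \<mu> y"
proof -
  obtain n and e :: "nat \<Rightarrow> 'h" where onb: "is_onb n e"
    using onb_exists[OF fd] by blast
  have \<mu>: "clinear \<mu>" using eff by (simp add: effect_def positive_op_def)
  have U': "bounded_clinear U" "\<And>x. U (adj U x) = x"
    using U by (auto simp: unitary_op_def fun_eq_iff)
  define P where "P x = \<mu> x - \<mu> (\<mu> x)" for x
  define G where "G x = of_real c *\<^sub>C \<mu> x + of_real d *\<^sub>C (x - \<mu> x)" for x
  have G_inv: "G (S (adj S x)) = x" for x
    using adj_inverse[OF S T ST] by (simp add: G_def TT[symmetric] TS)
  have "clinear (\<lambda>x. adj T (T x))"
    using clinear_comp[OF clinear_adj[OF T] bounded_clinear_imp_clinear[OF T]] by (simp add: comp_def)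
  moreover have "G = (\<lambda>x. adj T (T x))"
    by (simp add: fun_eq_iff G_def TT)
  ultimately have "clinear G" by simp
  have lin: "clinear (adj U)" "clinear (\<mu> \<circ> U)" "clinear (adj S)" "clinear (\<mu> \<circ> G \<circ> S)"
    using clinear_adj[OF U'(1)] clinear_adj[OF S] \<open>clinear G\<close> \<mu>
      bounded_clinear_imp_clinear[OF U'(1)] bounded_clinear_imp_clinear[OF S]
    by (simp_all add: clinear_comp)
  have "onb_trace n e (\<lambda>x. adj S (of_real c *\<^sub>C \<mu> (S x))) = onb_trace n e (adj U \<circ> (\<mu> \<circ> U))"
    by (simp add: onb_trace_def equiv)
  also have "\<dots> = onb_trace n e ((\<mu> \<circ> U) \<circ> adj U)"
    by (rule onb_trace_comp_commute[OF onb lin(1,2)])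
  also have "\<dots> = onb_trace n e ((\<mu> \<circ> G \<circ> S) \<circ> adj S)"
    by (simp add: onb_trace_def U'(2) G_inv)
  also have "\<dots> = onb_trace n e (\<lambda>x. adj S (\<mu> (G (S x))))"
    by (subst onb_trace_comp_commute[OF onb lin(4,3)]) (simp add: comp_def)
  finally have "onb_trace n e (\<lambda>x. adj S (of_real c *\<^sub>C \<mu> (S x)) - adj S (\<mu> (G (S x)))) = 0"
    by (simp add: onb_trace_diff)
  moreover have "adj S (of_real c *\<^sub>C \<mu> w) - adj S (\<mu> (G w)) = (of_real c - of_real d) *\<^sub>C adj S (P w)" for w
  proof -
    have "\<mu> (G w) = of_real c *\<^sub>C \<mu> (\<mu> w) + of_real d *\<^sub>C (\<mu> w - \<mu> (\<mu> w))"
      by (simp add: G_def clinear_add[OF \<mu>] clinear_cscale[OF \<mu>] clinear_diff[OF \<mu>])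
    then have "of_real c *\<^sub>C \<mu> w - \<mu> (G w) = (of_real c - of_real d) *\<^sub>C P w"
      by (simp add: P_def cscale_diff_left cscale_diff_right algebra_simps)
    then show ?thesis
      using clinear_adj[OF S] by (metis clinear_cscale clinear_diff)
  qed
  ultimately have "onb_trace n e (\<lambda>x. adj S (P (S x))) = 0"
    using \<open>c \<noteq> d\<close> by (simp add: onb_trace_cscale)
  moreover have P: "positive_op P"
    using effect_sub_square_positive[OF eff] by (simp add: P_def[abs_def])
  ultimately have "adj S (P (S x)) = 0" for x
    by (intro positive_op_trace_eq_zero[OF onb] positive_op_congruence[OF _ S])
  then have "P (S x) = 0" for x
    using P by (intro positive_op_eq_zero) (simp_all add: cinner_adj_right[OF S])
  then show ?thesis
    using ST[of y] by (metis P_def right_minus_eq)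
qed


lemma cstar_extreme_effect_idempotent:
  fixes I :: "'x set \<Rightarrow> 'a::cstar_algebra \<Rightarrow> 'h::chilbert \<Rightarrow> 'h"
  assumes fd: "finite_dim TYPE('h)" and extreme: "cstar_extreme_instrument M I" and A0: "A0 \<in> sets M"
  shows "I A0 1 (I A0 1 y) = I A0 1 y"
proof -
  have "0 < (1/4::real)" "(1/4::real) < 1" by simp_all
  then obtain T S U :: "'h \<Rightarrow> 'h" where T: "bounded_clinear T" and S: "bounded_clinear S"
    and ST: "\<And>x. S (T x) = x" and TS: "\<And>x. T (S x) = x"
    and TT: "\<And>x. adj T (T x) = of_real (1/4) *\<^sub>C I A0 1 x + of_real (1 - 1/4) *\<^sub>C (x - I A0 1 x)"
    and U: "unitary_op U" and equiv: "\<And>x. adj S (of_real (1/4) *\<^sub>C I A0 1 (S x)) = adj U (I A0 1 (U x))"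
    using cstar_extreme_compression_unitary[OF fd extreme A0] by blast
  have "ucp_instrument M I"
    using extreme by (simp add: cstar_extreme_instrument_def)
  then have "effect (I A0 1)"
    using A0 by (rule ucp_instrument_effect)
  from effect_idempotent_if_compression_unitarily_equivalent[OF fd this T S ST TS TT _ U equiv]
  show ?thesis by simp
qed

lemma isometry_range_invariant_orth_proj:
  fixes Q :: "'k::chilbert \<Rightarrow> 'k" and V :: "'h::chilbert \<Rightarrow> 'k"
  assumes Q: "orth_proj Q" and V: "bounded_clinear V" and iso: "\<And>h. adj V (V h) = h"
    and idem: "\<And>h. adj V (Q (V (adj V (Q (V h))))) = adj V (Q (V h))"
  shows "Q (V h) = V (adj V (Q (V h)))"
proof -
  define \<mu> where "\<mu> h = adj V (Q (V h))" for h
  have \<mu>_sa: "cinner (\<mu> x) y = cinner x (\<mu> y)" for x y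
    by (simp add: \<mu>_def cinner_adj_left[OF V] cinner_adj_right[OF V, symmetric] orth_proj_self_adjoint[OF Q])
  have "cinner (Q (V h)) (Q (V h)) = cinner h (\<mu> h)"
    by (simp add: \<mu>_def orth_proj_self_adjoint[OF Q] orth_proj_idem[OF Q] cinner_adj_right[OF V])
  moreover have "cinner (V (\<mu> h)) (Q (V h)) = cinner (\<mu> h) (\<mu> h)"
    by (simp add: \<mu>_def cinner_adj_right[OF V])
  moreover have "cinner (Q (V h)) (V (\<mu> h)) = cinner (\<mu> h) (\<mu> h)"
    using calculation(2) by (metis cinner.conj_sym)
  moreover have "cinner (V (\<mu> h)) (V (\<mu> h)) = cinner (\<mu> h) (\<mu> h)"
    by (simp add: cinner_adj_right[OF V] iso)
  moreover have "cinner (\<mu> h) (\<mu> h) = cinner h (\<mu> h)"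
    using \<mu>_sa[of h "\<mu> h"] idem[of h] by (simp add: \<mu>_def)
  ultimately have "cinner (Q (V h) - V (\<mu> h)) (Q (V h) - V (\<mu> h)) = 0"
    by (simp add: cinner.diff_left cinner.diff_right)
  then show ?thesis
    by (simp add: cinner.self_eq_zero \<mu>_def)
qed

lemma lin_span_mono: "S \<subseteq> T \<Longrightarrow> lin_span S \<subseteq> lin_span T"
  unfolding lin_span_def by blast

lemma norm_closure_mono: "S \<subseteq> T \<Longrightarrow> norm_closure S \<subseteq> norm_closure T"
  unfolding norm_closure_def by blast

theorem corollary3p30:
  fixes M :: "'x measure"
    and \<I> :: "'x set \<Rightarrow> 'a::cstar_algebra \<Rightarrow> 'h::chilbert \<Rightarrow> 'h"
    and \<pi> :: "'a \<Rightarrow> 'k::chilbert \<Rightarrow> 'k"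
    and E :: "'x set \<Rightarrow> 'k \<Rightarrow> 'k"
    and V :: "'h \<Rightarrow> 'k"
  assumes "finite_dim TYPE('h)"
    and "cstar_extreme_instrument M \<I>"
    and "minimal_bi_dilation M \<I> \<pi> E V"
  shows "norm_closure (lin_span {\<pi> a (V h) | a h. True}) = UNIV"
proof -
  have \<pi>1: "\<pi> 1 = id" and V: "bounded_clinear V" and E: "spectral_measure M E"
    and dilation: "\<And>A a. A \<in> sets M \<Longrightarrow> \<I> A a = adj V \<circ> \<pi> a \<circ> E A \<circ> V"
    and dense: "norm_closure (lin_span {\<pi> a (E A (V h)) | a A h. A \<in> sets M}) = UNIV"
    using assms(3) unfolding minimal_bi_dilation_def unital_star_hom_def by blast+
  have effect: "\<I> A 1 h = adj V (E A (V h))" if "A \<in> sets M" for A h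
    using dilation[OF that, of 1] by (simp add: \<pi>1)
  have iso: "adj V (V h) = h" for h
    using effect[of "space M" h] E assms(2)
    by (simp add: spectral_measure_def cstar_extreme_instrument_def ucp_instrument_def)
  have range: "E A (V h) = V (\<I> A 1 h)" if "A \<in> sets M" for A h
  proof -
    have Q: "orth_proj (E A)" using E that by (simp add: spectral_measure_def)
    have idem: "adj V (E A (V (adj V (E A (V h))))) = adj V (E A (V h))" for h
      using cstar_extreme_effect_idempotent[OF assms(1,2) that] by (simp add: effect[OF that])
    show ?thesis
      using isometry_range_invariant_orth_proj[OF Q V iso idem] by (simp add: effect[OF that])
  qed
  have "{\<pi> a (E A (V h)) | a A h. A \<in> sets M} \<subseteq> {\<pi> a (V h) | a h. True}"
    using range by fastforce
  then show ?thesis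
    using norm_closure_mono[OF lin_span_mono] dense by blast
qed

end
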